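(* Let $a_n$ denote the number of subrings of $\mathbb{Z}[t]/(t^3)$ of index $n$. Then \[ \sum_{n\le B} a_n\sim \frac{1}{12\,\zeta(2)}\,B\,(\ln B)^2\qquad\text{as } B\to\infty . \]
   Context: A subring of $\mathbb{Z}[t]/(t^3)$ means an additive subgroup of finite index that contains $1$ and is closed under multiplication. The index is its index as an additive subgroup. $\zeta$ denotes the Riemann zeta function. *)

theory Defs
  imports Complex_Main "HOL-Library.Landau_Symbols" "HOL-Library.Product_Plus"
begin

text \<open>The ring Z[t]/(t^3), modelled on int \<times> int \<times> int: the triple (a,b,c)
  stands for a + b t + c t^2.\<close>

type_synonym trunc3 = "int \<times> int \<times> int"

definition t3_one :: trunc3 where
  "t3_one = (1, 0, 0)"

definition t3_mult :: "trunc3 \<Rightarrow> trunc3 \<Rightarrow> trunc3" where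
  "t3_mult x y = (case x of (a0, a1, a2) \<Rightarrow> case y of (b0, b1, b2) \<Rightarrow>
      (a0 * b0, a0 * b1 + a1 * b0, a0 * b2 + a1 * b1 + a2 * b0))"

definition is_add_subgroup :: "trunc3 set \<Rightarrow> bool" where
  "is_add_subgroup S \<longleftrightarrow> 0 \<in> S \<and> (\<forall>x\<in>S. \<forall>y\<in>S. x + y \<in> S) \<and> (\<forall>x\<in>S. - x \<in> S)"

definition cosets3 :: "trunc3 set \<Rightarrow> trunc3 set set" where
  "cosets3 S = (\<lambda>x. (\<lambda>s. x + s) ` S) ` UNIV"

definition subgroup_index :: "trunc3 set \<Rightarrow> nat" where
  "subgroup_index S = card (cosets3 S)"

definition is_subring3 :: "trunc3 set \<Rightarrow> bool" where
  "is_subring3 S \<longleftrightarrow> is_add_subgroup S \<and> finite (cosets3 S) \<and> t3_one \<in> S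
     \<and> (\<forall>x\<in>S. \<forall>y\<in>S. t3_mult x y \<in> S)"

definition subring_count :: "nat \<Rightarrow> nat" where
  "subring_count n = card {S. is_subring3 S \<and> subgroup_index S = n}"

definition zeta_real :: "real \<Rightarrow> real" where
  "zeta_real s = (\<Sum>n. 1 / (real (Suc n)) powr s)"

end

theory Submission
  imports Defs "HOL-Analysis.Analysis" "HOL-Computational_Algebra.Squarefree" "HOL-Real_Asymp.Real_Asymp"
begin

text \<open>A finite-index subring contains \<open>1\<close>, so in Hermite normal form it is the lattice spanned by
  \<open>(1,0,0)\<close>, \<open>(0,b,x)\<close>, \<open>(0,0,c)\<close> with \<open>0 \<le> x < c\<close>; it is closed under multiplication iff
  \<open>c dvd b\<^sup>2\<close>, and its index is \<open>b c\<close>. Hence \<open>\<Sum>n\<le>N a\<^sub>n = \<Sum>{c | b c \<le> N, c dvd b\<^sup>2}\<close>.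
  Writing \<open>c = m k\<^sup>2\<close> with \<open>m\<close> squarefree, \<open>c dvd b\<^sup>2\<close> means \<open>b = d m k\<close>, so the sum is
  \<open>\<Sum>{m k\<^sup>2 \<lfloor>N / (m\<^sup>2 k\<^sup>3)\<rfloor> | m\<^sup>2 k\<^sup>3 \<le> N} = N \<Sum> 1/(m k) + O(N log N)\<close>.
  The sum \<open>S(Y)\<close> of \<open>1/m\<close> over squarefree \<open>m \<le> Y\<close> is \<open>ln Y / \<zeta>(2) + O(1)\<close>: the identity
  \<open>H(Y) = \<Sum>q q\<^sup>-\<^sup>2 S(Y/q\<^sup>2)\<close> expresses the error at \<open>Y\<close> through the errors at \<open>Y/q\<^sup>2\<close>, \<open>q \<ge> 2\<close>,
  with total weight \<open>\<zeta>(2) - 1 < 1\<close>. Summing \<open>S(\<surd>(N/k\<^sup>3))/k\<close> over \<open>k \<le> N\<^sup>1\<^sup>/\<^sup>3\<close> then yields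
  \<open>(ln N)\<^sup>2 / (12 \<zeta>(2)) + O(ln N)\<close>.\<close>

definition scale3 :: "int \<Rightarrow> trunc3 \<Rightarrow> trunc3" where
  "scale3 k p = (case p of (a, y, z) \<Rightarrow> (k * a, k * y, k * z))"

lemma scale3_simp [simp]: "scale3 k (a, y, z) = (k * a, k * y, k * z)"
  by (simp add: scale3_def)

lemma add_subgroup_diff: "is_add_subgroup S \<Longrightarrow> p \<in> S \<Longrightarrow> q \<in> S \<Longrightarrow> p - q \<in> S"
  unfolding is_add_subgroup_def by (metis diff_conv_add_uminus)

lemma add_subgroup_scale3:
  assumes S: "is_add_subgroup S" and p: "p \<in> S"
  shows "scale3 k p \<in> S"
proof -
  obtain a y z where p_eq: "p = (a, y, z)" by (cases p) auto
  have nat: "scale3 (int n) p \<in> S" for n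
  proof (induction n)
    case 0
    then show ?case using S by (simp add: p_eq is_add_subgroup_def zero_prod_def)
  next
    case (Suc n)
    have "scale3 (int (Suc n)) p = scale3 (int n) p + p" by (simp add: p_eq algebra_simps)
    then show ?case using Suc S p unfolding is_add_subgroup_def by simp
  qed
  show ?thesis
  proof (cases "k \<ge> 0")
    case True
    then show ?thesis using nat[of "nat k"] by simp
  next
    case False
    have "scale3 k p = - scale3 (int (nat (-k))) p" using False by (simp add: p_eq)
    then show ?thesis using nat[of "nat (-k)"] S unfolding is_add_subgroup_def by simp
  qed
qed

lemma coset_eq_iff:
  assumes "is_add_subgroup S"
  shows "(\<lambda>s. p + s) ` S = (\<lambda>s. q + s) ` S \<longleftrightarrow> p - q \<in> S"
proof
  assume eq: "(\<lambda>s. p + s) ` S = (\<lambda>s. q + s) ` S"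
  have "p \<in> (\<lambda>s. p + s) ` S" using assms unfolding is_add_subgroup_def by force
  then obtain s where "s \<in> S" "p = q + s" using eq by auto
  then show "p - q \<in> S" by simp
next
  assume pq: "p - q \<in> S"
  have shift: "(\<lambda>s. p' + s) ` S \<subseteq> (\<lambda>s. q' + s) ` S" if "p' - q' \<in> S" for p' q'
  proof
    fix w assume "w \<in> (\<lambda>s. p' + s) ` S"
    then obtain s where s: "s \<in> S" "w = p' + s" by auto
    have "(p' - q') + s \<in> S" using s that assms unfolding is_add_subgroup_def by blast
    moreover have "w = q' + ((p' - q') + s)" using s by simp
    ultimately show "w \<in> (\<lambda>s. q' + s) ` S" by blast
  qed
  have "q - p \<in> S" using pq assms unfolding is_add_subgroup_def by (metis minus_diff_eq)
  then show "(\<lambda>s. p + s) ` S = (\<lambda>s. q + s) ` S" using shift pq by blast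
qed

text \<open>Pigeonhole on the cosets of the multiples of \<open>v\<close>.\<close>
lemma finite_index_imp_multiple_mem:
  assumes S: "is_add_subgroup S" and fin: "finite (cosets3 S)"
  obtains n :: int where "n > 0" "scale3 n v \<in> S"
proof -
  define K where "K = card (cosets3 S)"
  define f where "f = (\<lambda>j::nat. (\<lambda>s. scale3 (int j) v + s) ` S)"
  have "f ` {0..K} \<subseteq> cosets3 S" unfolding f_def cosets3_def by auto
  then have "\<not> inj_on f {0..K}"
    using card_inj_on_le[OF _ _ fin] unfolding K_def by fastforce
  then obtain i j where ij: "i \<noteq> j" "f i = f j" unfolding inj_on_def by blast
  obtain a y z where v: "v = (a, y, z)" by (cases v) auto
  have "scale3 (int i) v - scale3 (int j) v \<in> S"
    using ij(2) coset_eq_iff[OF S] unfolding f_def by blast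
  moreover have "scale3 (int i) v - scale3 (int j) v = scale3 (int i - int j) v"
    by (simp add: v algebra_simps)
  ultimately have diff: "scale3 (int i - int j) v \<in> S" by simp
  show thesis
  proof (cases "i > j")
    case True
    then show thesis using diff by (intro that[of "int i - int j"]) auto
  next
    case False
    have "scale3 (int j - int i) v = - scale3 (int i - int j) v" by (simp add: v algebra_simps)
    then have "scale3 (int j - int i) v \<in> S" using diff S unfolding is_add_subgroup_def by simp
    then show thesis using False ij(1) by (intro that[of "int j - int i"]) auto
  qed
qed

lemma int_add_subgroup_eq_multiples:
  fixes I :: "int set"
  assumes diff: "\<And>x y. x \<in> I \<Longrightarrow> y \<in> I \<Longrightarrow> x - y \<in> I" and "n0 \<in> I" "n0 > 0"
  obtains g where "g > 0" "\<And>y. y \<in> I \<longleftrightarrow> g dvd y"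
proof -
  have zero: "0 \<in> I" using diff[of n0 n0] assms(2) by simp
  have neg: "x \<in> I \<Longrightarrow> - x \<in> I" for x using diff[of 0 x] zero by simp
  have add: "x \<in> I \<Longrightarrow> y \<in> I \<Longrightarrow> x + y \<in> I" for x y using diff[of x "-y"] neg by simp
  have ex: "\<exists>n::nat. n > 0 \<and> int n \<in> I" using assms(2,3) by (intro exI[of _ "nat n0"]) auto
  define n where "n = (LEAST n::nat. n > 0 \<and> int n \<in> I)"
  have n: "n > 0" "int n \<in> I" using LeastI_ex[OF ex] unfolding n_def by auto
  have n_min: "m < n \<Longrightarrow> m > 0 \<Longrightarrow> int m \<notin> I" for m
    using not_less_Least[of m "\<lambda>n::nat. n > 0 \<and> int n \<in> I"] unfolding n_def by auto
  have nat_mult: "int k * int n \<in> I" for k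
    by (induction k) (use zero n add in \<open>auto simp: algebra_simps\<close>)
  have mult: "k * int n \<in> I" for k
    using nat_mult[of "nat k"] neg[OF nat_mult[of "nat (-k)"]] by (cases "k \<ge> 0") auto
  show thesis
  proof (rule that[of "int n"])
    show "int n > 0" using n by simp
    fix y
    show "y \<in> I \<longleftrightarrow> int n dvd y"
    proof
      assume y: "y \<in> I"
      have "y mod int n = y - (y div int n) * int n" by (simp add: minus_div_mult_eq_mod)
      then have "y mod int n \<in> I" using diff[OF y mult] by simp
      moreover have "0 \<le> y mod int n" "y mod int n < int n" using n by auto
      ultimately have "y mod int n = 0"
        using n_min[of "nat (y mod int n)"] by (cases "y mod int n = 0") (auto simp: nat_less_iff)
      then show "int n dvd y" by auto
    next
      assume "int n dvd y"
      then show "y \<in> I" using mult by (auto simp: mult.commute)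
    qed
  qed
qed

definition hnf_lattice :: "int \<Rightarrow> int \<Rightarrow> int \<Rightarrow> trunc3 set" where
  "hnf_lattice b c x = {(a, u * b, u * x + v * c) | a u v. True}"

lemma hnf_lattice_iff: "(a, y, z) \<in> hnf_lattice b c x \<longleftrightarrow> (\<exists>u v. y = u * b \<and> z = u * x + v * c)"
  by (auto simp: hnf_lattice_def)

lemma hnf_lattice_dvd_iff:
  assumes "b \<noteq> 0"
  shows "(a, y, z) \<in> hnf_lattice b c x \<longleftrightarrow> b dvd y \<and> c dvd (z - (y div b) * x)"
proof
  assume "(a, y, z) \<in> hnf_lattice b c x"
  then obtain u v where "y = u * b" "z = u * x + v * c" by (auto simp: hnf_lattice_iff)
  then show "b dvd y \<and> c dvd (z - (y div b) * x)" using assms by simp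
next
  assume "b dvd y \<and> c dvd (z - (y div b) * x)"
  then obtain v where "y = (y div b) * b" "z = (y div b) * x + v * c"
    by (metis add.commute diff_add_cancel dvd_div_mult_self dvdE mult.commute)
  then show "(a, y, z) \<in> hnf_lattice b c x" unfolding hnf_lattice_iff by blast
qed

lemma hnf_lattice_generators:
  "(1, 0, 0) \<in> hnf_lattice b c x" "(0, b, x) \<in> hnf_lattice b c x" "(0, 0, c) \<in> hnf_lattice b c x"
  unfolding hnf_lattice_iff by (auto intro: exI[of _ 0] exI[of _ 1])

lemma is_add_subgroup_hnf_lattice: "is_add_subgroup (hnf_lattice b c x)"
  unfolding is_add_subgroup_def
proof (intro conjI ballI)
  show "0 \<in> hnf_lattice b c x" unfolding zero_prod_def hnf_lattice_iff by (auto intro: exI[of _ 0])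
next
  fix p q assume "p \<in> hnf_lattice b c x" "q \<in> hnf_lattice b c x"
  then obtain a u v a' u' v' where "p = (a, u * b, u * x + v * c)" "q = (a', u' * b, u' * x + v' * c)"
    unfolding hnf_lattice_def by blast
  then have "p + q = (a + a', (u + u') * b, (u + u') * x + (v + v') * c)" by (simp add: algebra_simps)
  then show "p + q \<in> hnf_lattice b c x" unfolding hnf_lattice_def by blast
next
  fix p assume "p \<in> hnf_lattice b c x"
  then obtain a u v where "p = (a, u * b, u * x + v * c)" unfolding hnf_lattice_def by blast
  then have "- p = (- a, (- u) * b, (- u) * x + (- v) * c)" by simp
  then show "- p \<in> hnf_lattice b c x" unfolding hnf_lattice_def by blast
qed

lemma cosets3_hnf_lattice:
  assumes b: "b > 0" and c: "c > 0"
  shows "cosets3 (hnf_lattice b c x) = (\<lambda>(i, j). (\<lambda>s. (0, i, j) + s) ` hnf_lattice b c x) ` ({0..<b} \<times> {0..<c})"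
    (is "_ = ?f ` _")
proof
  show "?f ` ({0..<b} \<times> {0..<c}) \<subseteq> cosets3 (hnf_lattice b c x)" unfolding cosets3_def by auto
next
  show "cosets3 (hnf_lattice b c x) \<subseteq> ?f ` ({0..<b} \<times> {0..<c})"
  proof
    fix C assume "C \<in> cosets3 (hnf_lattice b c x)"
    then obtain p0 p1 p2 where C: "C = (\<lambda>s. (p0, p1, p2) + s) ` hnf_lattice b c x"
      unfolding cosets3_def by auto
    define i where "i = p1 mod b"
    define j where "j = (p2 - (p1 div b) * x) mod c"
    have "(p0, p1, p2) - (0, i, j) = (p0, (p1 div b) * b, (p1 div b) * x + ((p2 - (p1 div b) * x) div c) * c)"
      unfolding i_def j_def
      using div_mult_mod_eq[of p1 b] div_mult_mod_eq[of "p2 - (p1 div b) * x" c] by (simp add: algebra_simps)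
    then have "(p0, p1, p2) - (0, i, j) \<in> hnf_lattice b c x" unfolding hnf_lattice_def by blast
    then have "C = ?f (i, j)" unfolding C using coset_eq_iff[OF is_add_subgroup_hnf_lattice] by simp
    moreover have "(i, j) \<in> {0..<b} \<times> {0..<c}" unfolding i_def j_def using b c by auto
    ultimately show "C \<in> ?f ` ({0..<b} \<times> {0..<c})" by blast
  qed
qed

lemma inj_on_hnf_lattice_cosets:
  assumes b: "b > 0" and c: "c > 0"
  shows "inj_on (\<lambda>(i, j). (\<lambda>s. (0, i, j) + s) ` hnf_lattice b c x) ({0..<b} \<times> {0..<c})"
proof (rule inj_onI)
  fix p p' assume "p \<in> {0..<b} \<times> {0..<c}" "p' \<in> {0..<b} \<times> {0..<c}"
    and eq: "(\<lambda>(i, j). (\<lambda>s. (0, i, j) + s) ` hnf_lattice b c x) p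
      = (\<lambda>(i, j). (\<lambda>s. (0, i, j) + s) ` hnf_lattice b c x) p'"
  moreover obtain i j i' j' where p: "p = (i, j)" "p' = (i', j')" by (cases p, cases p') auto
  ultimately have ij: "(i, j) \<in> {0..<b} \<times> {0..<c}" "(i', j') \<in> {0..<b} \<times> {0..<c}" by auto
  from eq have "(0, i - i', j - j') \<in> hnf_lattice b c x"
    using coset_eq_iff[OF is_add_subgroup_hnf_lattice] unfolding p by simp
  then have dvd: "b dvd (i - i')" "c dvd ((j - j') - ((i - i') div b) * x)"
    using b by (auto simp: hnf_lattice_dvd_iff)
  have "i = i'" using dvd(1) ij b by (metis atLeastLessThan_iff mem_Sigma_iff mod_pos_pos_trivial mod_eq_dvd_iff)
  then have "c dvd (j - j')" using dvd(2) by simp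
  then show "p = p'"
    unfolding p using \<open>i = i'\<close> ij c by (metis atLeastLessThan_iff mem_Sigma_iff mod_pos_pos_trivial mod_eq_dvd_iff)
qed

lemma finite_cosets3_hnf_lattice:
  "b > 0 \<Longrightarrow> c > 0 \<Longrightarrow> finite (cosets3 (hnf_lattice b c x))"
  by (simp add: cosets3_hnf_lattice)

lemma subgroup_index_hnf_lattice:
  assumes "b > 0" "c > 0"
  shows "subgroup_index (hnf_lattice b c x) = nat (b * c)"
proof -
  have "subgroup_index (hnf_lattice b c x) = card ({0..<b} \<times> {0..<c})"
    unfolding subgroup_index_def cosets3_hnf_lattice[OF assms]
    by (rule card_image[OF inj_on_hnf_lattice_cosets[OF assms]])
  then show ?thesis using assms by (simp add: card_cartesian_product nat_mult_distrib)
qed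

lemma is_subring3_hnf_lattice_iff:
  assumes b: "b > 0" and c: "c > 0"
  shows "is_subring3 (hnf_lattice b c x) \<longleftrightarrow> c dvd b^2"
proof -
  have "(\<forall>p\<in>hnf_lattice b c x. \<forall>q\<in>hnf_lattice b c x. t3_mult p q \<in> hnf_lattice b c x) \<longleftrightarrow> c dvd b^2"
  proof
    assume "\<forall>p\<in>hnf_lattice b c x. \<forall>q\<in>hnf_lattice b c x. t3_mult p q \<in> hnf_lattice b c x"
    then have "t3_mult (0, b, x) (0, b, x) \<in> hnf_lattice b c x" using hnf_lattice_generators by blast
    then show "c dvd b^2" using b by (simp add: t3_mult_def hnf_lattice_dvd_iff power2_eq_square)
  next
    assume "c dvd b^2"
    then obtain k where k: "b^2 = c * k" by (auto elim: dvdE)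
    show "\<forall>p\<in>hnf_lattice b c x. \<forall>q\<in>hnf_lattice b c x. t3_mult p q \<in> hnf_lattice b c x"
    proof (intro ballI)
      fix p q assume "p \<in> hnf_lattice b c x" "q \<in> hnf_lattice b c x"
      then obtain a u v a' u' v' where "p = (a, u * b, u * x + v * c)" "q = (a', u' * b, u' * x + v' * c)"
        unfolding hnf_lattice_def by blast
      then have "t3_mult p q = (a * a', (a * u' + u * a') * b,
                 (a * u' + u * a') * x + (a * v' + v * a' + u * u' * k) * c)"
        unfolding t3_mult_def using k by (simp add: algebra_simps power2_eq_square)
      then show "t3_mult p q \<in> hnf_lattice b c x" unfolding hnf_lattice_def by blast
    qed
  qed
  then show ?thesis
    using hnf_lattice_generators(1) is_add_subgroup_hnf_lattice finite_cosets3_hnf_lattice[OF b c]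
    unfolding is_subring3_def t3_one_def by blast
qed

lemma hnf_lattice_inj:
  assumes "b > 0" "c > 0" "b' > 0" "c' > 0" "0 \<le> x" "x < c" "0 \<le> x'" "x' < c'"
    and eq: "hnf_lattice b c x = hnf_lattice b' c' x'"
  shows "b = b' \<and> c = c' \<and> x = x'"
proof -
  have "(0, b, x) \<in> hnf_lattice b' c' x'" "(0, b', x') \<in> hnf_lattice b c x"
    "(0, 0, c) \<in> hnf_lattice b' c' x'" "(0, 0, c') \<in> hnf_lattice b c x"
    using hnf_lattice_generators eq by metis+
  then have "b' dvd b" "b dvd b'" "c' dvd c" "c dvd c'" "c' dvd (x - (b div b') * x')"
    using assms(1,3) by (auto simp: hnf_lattice_dvd_iff)
  moreover from this have "b = b'" "c = c'" using assms by (simp_all add: zdvd_antisym_nonneg)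
  ultimately show ?thesis
    using assms by (metis div_self less_irrefl mult_1 mod_pos_pos_trivial mod_eq_dvd_iff)
qed

lemma add_subgroup_eq_hnf_lattice:
  assumes S: "is_add_subgroup S" and one: "(1, 0, 0) \<in> S" and bx: "(0, b, x) \<in> S"
    and b: "b \<noteq> 0" "\<And>y. (\<exists>a z. (a, y, z) \<in> S) \<longleftrightarrow> b dvd y"
    and c: "\<And>z. (0, 0, z) \<in> S \<longleftrightarrow> c dvd z"
  shows "S = hnf_lattice b c x"
proof
  show "S \<subseteq> hnf_lattice b c x"
  proof
    fix p assume pS: "p \<in> S"
    obtain a y z where p: "p = (a, y, z)" by (cases p) auto
    then obtain u where u: "y = b * u" using b(2) pS by (auto elim: dvdE)
    have "p - scale3 a (1, 0, 0) - scale3 u (0, b, x) \<in> S"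
      by (intro add_subgroup_diff[OF S] pS add_subgroup_scale3[OF S] one bx)
    moreover have "p - scale3 a (1, 0, 0) - scale3 u (0, b, x) = (0, 0, z - u * x)"
      unfolding p using u by (simp add: algebra_simps)
    ultimately have "c dvd (z - u * x)" using c by simp
    then show "p \<in> hnf_lattice b c x" unfolding p using b u by (simp add: hnf_lattice_dvd_iff mult.commute)
  qed
next
  show "hnf_lattice b c x \<subseteq> S"
  proof
    fix p assume "p \<in> hnf_lattice b c x"
    then obtain a u v where p: "p = (a, u * b, u * x + v * c)" unfolding hnf_lattice_def by blast
    have "(0, 0, c * v) \<in> S" using c by simp
    then have "scale3 a (1, 0, 0) + scale3 u (0, b, x) + (0, 0, c * v) \<in> S"
      using S add_subgroup_scale3[OF S one] add_subgroup_scale3[OF S bx]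
      unfolding is_add_subgroup_def by blast
    moreover have "scale3 a (1, 0, 0) + scale3 u (0, b, x) + (0, 0, c * v) = p"
      unfolding p by (simp add: algebra_simps)
    ultimately show "p \<in> S" by simp
  qed
qed

lemma is_subring3_imp_hnf_lattice:
  assumes S: "is_subring3 S"
  obtains b c x where "b > 0" "c > 0" "0 \<le> x" "x < c" "S = hnf_lattice b c x"
proof -
  have G: "is_add_subgroup S" and fin: "finite (cosets3 S)" and one: "(1, 0, 0) \<in> S"
    using S unfolding is_subring3_def t3_one_def by auto
  have zero: "(0, 0, 0) \<in> S" using G unfolding is_add_subgroup_def by (simp add: zero_prod_def)
  obtain n1 where n1: "n1 > 0" "scale3 n1 (0, 1, 0) \<in> S" using finite_index_imp_multiple_mem[OF G fin] .
  obtain n2 where n2: "n2 > 0" "scale3 n2 (0, 0, 1) \<in> S" using finite_index_imp_multiple_mem[OF G fin] .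
  obtain b where b: "b > 0" "\<And>y. y \<in> {y. \<exists>a z. (a, y, z) \<in> S} \<longleftrightarrow> b dvd y"
  proof (rule int_add_subgroup_eq_multiples)
    fix y y' assume "y \<in> {y. \<exists>a z. (a, y, z) \<in> S}" "y' \<in> {y. \<exists>a z. (a, y, z) \<in> S}"
    then obtain a z a' z' where "(a, y, z) \<in> S" "(a', y', z') \<in> S" by auto
    then have "(a, y, z) - (a', y', z') \<in> S" by (rule add_subgroup_diff[OF G])
    then show "y - y' \<in> {y. \<exists>a z. (a, y, z) \<in> S}" by auto
  qed (use n1 in auto)
  obtain c where c: "c > 0" "\<And>z. z \<in> {z. (0, 0, z) \<in> S} \<longleftrightarrow> c dvd z"
  proof (rule int_add_subgroup_eq_multiples)
    fix z z' assume "z \<in> {z. (0, 0, z) \<in> S}" "z' \<in> {z. (0, 0, z) \<in> S}"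
    then have "(0, 0, z) - (0, 0, z') \<in> S" by (intro add_subgroup_diff[OF G]) auto
    then show "z - z' \<in> {z. (0, 0, z) \<in> S}" by auto
  qed (use n2 in auto)
  obtain a0 z0 where az: "(a0, b, z0) \<in> S" using b(2)[of b] by auto
  define x where "x = z0 mod c"
  have "(0, 0, c * (z0 div c)) \<in> S" using c(2) by simp
  then have "(a0, b, z0) - scale3 a0 (1, 0, 0) - (0, 0, c * (z0 div c)) \<in> S"
    by (intro add_subgroup_diff[OF G] az add_subgroup_scale3[OF G one])
  moreover have "(a0, b, z0) - scale3 a0 (1, 0, 0) - (0, 0, c * (z0 div c)) = (0, b, x)"
    unfolding x_def by (simp add: minus_mult_div_eq_mod)
  ultimately have "(0, b, x) \<in> S" by simp
  then have "S = hnf_lattice b c x"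
    using add_subgroup_eq_hnf_lattice[OF G one] b c by simp
  moreover have "0 \<le> x" "x < c" unfolding x_def using c by auto
  ultimately show thesis using b c that by blast
qed

definition hnf_params :: "nat \<Rightarrow> ((nat \<times> nat) \<times> nat) set" where
  "hnf_params n = {((b, c), x). 0 < b \<and> 0 < c \<and> b * c = n \<and> c dvd b^2 \<and> x < c}"

lemma subring_count_eq_card_hnf_params: "subring_count n = card (hnf_params n)"
proof -
  define \<Phi> where "\<Phi> = (\<lambda>((b, c), x). hnf_lattice (int b) (int c) (int x))"
  have "{S. is_subring3 S \<and> subgroup_index S = n} = \<Phi> ` hnf_params n"
  proof
    show "\<Phi> ` hnf_params n \<subseteq> {S. is_subring3 S \<and> subgroup_index S = n}"
    proof clarify
      fix b c x assume "((b, c), x) \<in> hnf_params n"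
      then have h: "0 < b" "0 < c" "c dvd b^2" "b * c = n" unfolding hnf_params_def by auto
      then have "int c dvd (int b)^2" by (metis of_nat_dvd_iff of_nat_power)
      then show "is_subring3 (\<Phi> ((b, c), x)) \<and> subgroup_index (\<Phi> ((b, c), x)) = n"
        using h is_subring3_hnf_lattice_iff subgroup_index_hnf_lattice
        by (simp add: \<Phi>_def nat_mult_distrib)
    qed
  next
    show "{S. is_subring3 S \<and> subgroup_index S = n} \<subseteq> \<Phi> ` hnf_params n"
    proof
      fix S assume "S \<in> {S. is_subring3 S \<and> subgroup_index S = n}"
      then have S: "is_subring3 S" "subgroup_index S = n" by auto
      obtain b c x where h: "b > 0" "c > 0" "0 \<le> x" "x < c" "S = hnf_lattice b c x"
        using is_subring3_imp_hnf_lattice[OF S(1)] .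
      have "c dvd b^2" using is_subring3_hnf_lattice_iff[OF h(1,2)] S(1) h(5) by simp
      then have "nat c dvd (nat b)^2"
        using h by (metis nat_power_eq of_nat_dvd_iff int_nat_eq zero_le_power linorder_not_le order_less_imp_le)
      moreover have "nat b * nat c = n"
        using subgroup_index_hnf_lattice[OF h(1,2)] S(2) h by (simp add: nat_mult_distrib)
      ultimately have "((nat b, nat c), nat x) \<in> hnf_params n" unfolding hnf_params_def using h by auto
      moreover have "S = \<Phi> ((nat b, nat c), nat x)" unfolding \<Phi>_def using h by simp
      ultimately show "S \<in> \<Phi> ` hnf_params n" by blast
    qed
  qed
  moreover have "inj_on \<Phi> (hnf_params n)"
  proof (rule inj_onI)
    fix t t' assume tt: "t \<in> hnf_params n" "t' \<in> hnf_params n" "\<Phi> t = \<Phi> t'"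
    obtain b c x b' c' x' where t: "t = ((b, c), x)" "t' = ((b', c'), x')" by (metis prod.collapse)
    have "int b = int b' \<and> int c = int c' \<and> int x = int x'"
      by (rule hnf_lattice_inj) (use tt in \<open>auto simp: t \<Phi>_def hnf_params_def\<close>)
    then show "t = t'" unfolding t by simp
  qed
  ultimately show ?thesis unfolding subring_count_def by (simp add: card_image)
qed

definition index_pairs :: "nat \<Rightarrow> (nat \<times> nat) set" where
  "index_pairs N = {(b, c). 0 < b \<and> 0 < c \<and> b * c \<le> N \<and> c dvd b^2}"

lemma finite_index_pairs: "finite (index_pairs N)"
proof (rule finite_subset)
  show "index_pairs N \<subseteq> {0..N} \<times> {0..N}"
  proof
    fix p assume "p \<in> index_pairs N"
    then obtain b c where p: "p = (b, c)" "0 < b" "0 < c" "b * c \<le> N" unfolding index_pairs_def by auto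
    then have "b \<le> b * c" "c \<le> b * c" by simp_all
    then have "b \<le> N" "c \<le> N" using p(4) by linarith+
    then show "p \<in> {0..N} \<times> {0..N}" using p(1) by simp
  qed
qed auto

text \<open>Each pair \<open>(b, c)\<close> carries \<open>c\<close> subrings, one for each residue \<open>x mod c\<close>.\<close>
lemma sum_subring_count: "(\<Sum>n\<in>{1..N}. subring_count n) = (\<Sum>(b, c)\<in>index_pairs N. c)"
proof -
  define T where "T = Sigma (index_pairs N) (\<lambda>(b, c). {..<c})"
  define g where "g = (\<lambda>t :: (nat \<times> nat) \<times> nat. fst (fst t) * snd (fst t))"
  have "hnf_params n = {t \<in> T. g t = n}" if "n \<in> {1..N}" for n
    using that unfolding hnf_params_def T_def index_pairs_def g_def by auto
  then have "(\<Sum>n\<in>{1..N}. subring_count n) = (\<Sum>n\<in>{1..N}. card {t \<in> T. g t = n})"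
    by (simp add: subring_count_eq_card_hnf_params)
  also have "\<dots> = card T"
  proof -
    have "finite T" unfolding T_def using finite_index_pairs by auto
    moreover have "g ` T \<subseteq> {1..N}" unfolding T_def g_def index_pairs_def by (auto simp: Suc_le_eq)
    ultimately show ?thesis using sum.group[of T "{1..N}" g "\<lambda>_. 1::nat"] by simp
  qed
  also have "\<dots> = (\<Sum>(b, c)\<in>index_pairs N. card {..<c})"
    unfolding T_def using finite_index_pairs by (subst card_SigmaI) (auto simp: case_prod_beta)
  finally show ?thesis by (simp add: case_prod_beta)
qed

lemma squarefree_dvd_square_imp_dvd:
  fixes m y :: nat
  assumes sq: "squarefree m" and dvd: "m dvd y^2"
  shows "m dvd y"
proof -
  have m0: "m \<noteq> 0" using sq by (metis not_squarefree_0)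
  define g where "g = gcd m y"
  have g0: "g > 0" using m0 unfolding g_def by simp
  define m1 y1 where "m1 = m div g" and "y1 = y div g"
  have m: "m = g * m1" and y: "y = g * y1" unfolding m1_def y1_def g_def by auto
  have cop: "coprime m1 y1" unfolding m1_def y1_def g_def using m0 by (intro div_gcd_coprime) auto
  have "g * m1 dvd g * (g * y1^2)" using dvd unfolding m y by (simp add: power2_eq_square algebra_simps)
  then have "m1 dvd g * y1^2" using g0 by simp
  moreover have "coprime m1 (y1^2)" using cop by simp
  ultimately have "m1 dvd g" using coprime_dvd_mult_left_iff by blast
  then have "m1^2 dvd m" unfolding m by (simp add: power2_eq_square mult.commute)
  then have "m1 dvd 1" using sq squarefreeD by blast
  then show ?thesis unfolding m y by simp
qed

lemma squarefree_times_square_unique: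
  fixes m m' k k' :: nat
  assumes sq: "squarefree m" "squarefree m'" and k: "k > 0" "k' > 0"
    and eq: "m * k^2 = m' * k'^2"
  shows "k = k' \<and> m = m'"
proof -
  define g where "g = gcd k k'"
  have g0: "g > 0" using k unfolding g_def by simp
  define a a' where "a = k div g" and "a' = k' div g"
  have k_eq: "k = g * a" "k' = g * a'" unfolding a_def a'_def g_def by auto
  have cop: "coprime a a'" unfolding a_def a'_def g_def using k by (intro div_gcd_coprime) auto
  have "(m * a^2) * g^2 = (m' * a'^2) * g^2" using eq unfolding k_eq by (simp add: power_mult_distrib algebra_simps)
  then have eq': "m * a^2 = m' * a'^2" using g0 by simp
  have "a^2 dvd m' * a'^2" "a'^2 dvd m * a^2" using eq' by (metis dvd_triv_right)+
  moreover have "coprime (a^2) (a'^2)" using cop by simp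
  ultimately have "a^2 dvd m'" "a'^2 dvd m"
    using coprime_dvd_mult_left_iff coprime_commute by blast+
  then have "a dvd 1" "a' dvd 1" using sq squarefreeD by blast+
  then show ?thesis using eq' k_eq by simp
qed

lemma squarefree_times_square_decomposition:
  fixes c :: nat
  assumes "c > 0"
  obtains m k where "squarefree m" "k > 0" "c = m * k^2"
proof
  show "squarefree (squarefree_part c)" by simp
  show "square_part c > 0" using assms by (metis gr0I not_gr0 square_part_0_iff)
  show "c = squarefree_part c * square_part c ^ 2" by (rule squarefree_decompose)
qed

lemma squarefree_times_square_dvd_square_iff:
  fixes m k b :: nat
  assumes "squarefree m" "k > 0"
  shows "m * k^2 dvd b^2 \<longleftrightarrow> m * k dvd b"
proof
  assume dvd: "m * k^2 dvd b^2"
  then have "k^2 dvd b^2" by (rule dvd_mult_right)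
  then have "k dvd b" by (simp add: pow_divides_pow_iff)
  then obtain b1 where b: "b = k * b1" by (rule dvdE)
  have "k^2 * m dvd k^2 * b1^2" using dvd unfolding b by (simp add: power_mult_distrib mult.commute)
  then have "m dvd b1^2" using assms(2) by simp
  then have "m dvd b1" using assms(1) squarefree_dvd_square_imp_dvd by blast
  then show "m * k dvd b" unfolding b by (simp add: mult.commute)
next
  assume "m * k dvd b"
  then have "(m * k)^2 dvd b^2" by simp
  moreover have "m * k^2 dvd (m * k)^2" by (simp add: power2_eq_square)
  ultimately show "m * k^2 dvd b^2" by (rule dvd_trans[rotated])
qed

definition sqfree_pairs :: "nat \<Rightarrow> (nat \<times> nat) set" where
  "sqfree_pairs N = {(k, m). 0 < k \<and> 0 < m \<and> squarefree m \<and> m^2 * k^3 \<le> N}"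

lemma finite_sqfree_pairs: "finite (sqfree_pairs N)"
proof (rule finite_subset)
  show "sqfree_pairs N \<subseteq> {0..N} \<times> {0..N}"
  proof
    fix p assume "p \<in> sqfree_pairs N"
    then obtain k m where p: "p = (k, m)" "0 < k" "0 < m" "m^2 * k^3 \<le> N" unfolding sqfree_pairs_def by auto
    have "k \<le> k * (m^2 * k^2)" "m \<le> m * (m * k^3)" using p(2,3) by simp_all
    moreover have "k * (m^2 * k^2) = m^2 * k^3" "m * (m * k^3) = m^2 * k^3"
      by (simp_all add: power2_eq_square power3_eq_cube)
    ultimately have "k \<le> N" "m \<le> N" using p(4) by linarith+
    then show "p \<in> {0..N} \<times> {0..N}" using p(1) by simp
  qed
qed auto

lemma bij_betw_index_pairs:
  "bij_betw (\<lambda>((k, m), d). (d * m * k, m * k^2))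
     (SIGMA (k, m):sqfree_pairs N. {1..N div (m^2 * k^3)}) (index_pairs N)"
  (is "bij_betw ?f ?A _")
proof (rule bij_betw_imageI)
  show "inj_on ?f ?A"
  proof (rule inj_onI)
    fix t t' assume t_mem: "t \<in> ?A" "t' \<in> ?A" and eq: "?f t = ?f t'"
    obtain k m d k' m' d' where t: "t = ((k, m), d)" "t' = ((k', m'), d')" by (metis prod.collapse)
    have h: "0 < k" "0 < m" "squarefree m" "0 < k'" "0 < m'" "squarefree m'"
      using t_mem unfolding t sqfree_pairs_def by auto
    have e: "d * m * k = d' * m' * k'" "m * k^2 = m' * k'^2" using eq unfolding t by auto
    have kk: "k = k'" and mm: "m = m'" using squarefree_times_square_unique[OF h(3,6) h(1,4) e(2)] by auto
    have "d * (m * k) = d' * (m * k)" using e(1) unfolding kk mm by (simp add: mult.assoc)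
    then have "d = d'" using h(1,2) by simp
    then show "t = t'" unfolding t kk mm by simp
  qed
  have bc_eq: "d * m * k * (m * k^2) = d * (m^2 * k^3)" for d m k :: nat
    by (simp add: power2_eq_square power3_eq_cube)
  have bound_iff: "d * m * k * (m * k^2) \<le> N \<longleftrightarrow> d \<le> N div (m^2 * k^3)" if "0 < k" "0 < m" for d m k :: nat
    unfolding bc_eq using that by (simp add: less_eq_div_iff_mult_less_eq)
  show "?f ` ?A = index_pairs N"
  proof
    show "?f ` ?A \<subseteq> index_pairs N"
    proof clarify
      fix k m d assume "(k, m) \<in> sqfree_pairs N" "d \<in> {1..N div (m^2 * k^3)}"
      then have h: "0 < k" "0 < m" "squarefree m" "1 \<le> d" "d \<le> N div (m^2 * k^3)"
        unfolding sqfree_pairs_def by auto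
      have "m * k^2 dvd (d * m * k)^2"
        using squarefree_times_square_dvd_square_iff[OF h(3,1)] by simp
      then show "(d * m * k, m * k^2) \<in> index_pairs N"
        using h bound_iff[OF h(1,2)] unfolding index_pairs_def by simp
    qed
    show "index_pairs N \<subseteq> ?f ` ?A"
    proof
      fix p assume "p \<in> index_pairs N"
      then obtain b c where p: "p = (b, c)" "0 < b" "0 < c" "b * c \<le> N" "c dvd b^2"
        unfolding index_pairs_def by auto
      obtain m k where mk: "squarefree m" "k > 0" "c = m * k^2"
        using squarefree_times_square_decomposition[OF p(3)] .
      have "m * k dvd b" using p(5) squarefree_times_square_dvd_square_iff[OF mk(1,2)] unfolding mk(3) by simp
      then obtain d where "b = m * k * d" by (rule dvdE)
      then have b: "b = d * m * k" by (simp add: mult.commute mult.left_commute)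
      have pos: "0 < d" "0 < m" using p(2) unfolding b by simp_all
      have bc_le: "d * m * k * (m * k^2) \<le> N" using p(4) unfolding b mk(3) .
      then have "d \<le> N div (m^2 * k^3)" using bound_iff[OF mk(2) pos(2)] by blast
      moreover have "m^2 * k^3 \<le> d * (m^2 * k^3)" using pos(1) by simp
      then have "m^2 * k^3 \<le> N" using bc_le unfolding bc_eq by linarith
      ultimately have "((k, m), d) \<in> ?A" using mk(1,2) pos unfolding sqfree_pairs_def by simp
      moreover have "p = ?f ((k, m), d)" unfolding p(1) b mk(3) by simp
      ultimately show "p \<in> ?f ` ?A" by blast
    qed
  qed
qed

lemma sum_index_pairs_eq:
  "(\<Sum>(b, c)\<in>index_pairs N. c) = (\<Sum>(k, m)\<in>sqfree_pairs N. m * k^2 * (N div (m^2 * k^3)))"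
proof -
  have "(\<Sum>(b, c)\<in>index_pairs N. c)
      = (\<Sum>((k, m), d)\<in>(SIGMA (k, m):sqfree_pairs N. {1..N div (m^2 * k^3)}). m * k^2)"
    by (subst sum.reindex_bij_betw[OF bij_betw_index_pairs, symmetric]) (simp add: case_prod_beta)
  also have "\<dots> = (\<Sum>(k, m)\<in>sqfree_pairs N. \<Sum>d\<in>{1..N div (m^2 * k^3)}. m * k^2)"
    using sum.Sigma[OF finite_sqfree_pairs, where B = "\<lambda>(k, m). {1..N div (m^2 * k^3)}" and g = "\<lambda>(k, m) d. m * k^2"]
    by (simp add: split_def)
  finally show ?thesis by (simp add: case_prod_beta mult.commute)
qed

lemma zeta_real_2_sums: "(\<lambda>n. 1 / (real n + 1)^2) sums zeta_real 2"
proof -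
  have "(\<lambda>n. 1 / real (Suc n) powr 2) = (\<lambda>n. 1 / (real n + 1)^2)"
    by (simp add: powr_realpow add.commute)
  then show ?thesis using inverse_squares_sums unfolding zeta_real_def
    by (simp add: add.commute sums_iff)
qed

lemma zeta_real_2_eq: "zeta_real 2 = pi^2 / 6"
proof -
  have "(\<lambda>n. 1 / (real n + 1)^2) sums (pi^2 / 6)" using inverse_squares_sums by (simp add: add.commute)
  then show ?thesis using zeta_real_2_sums sums_unique2 by blast
qed

lemma zeta_real_2_bounds: "1 \<le> zeta_real 2" "zeta_real 2 < 2"
proof -
  have pi: "3 \<le> pi" "pi \<le> 3.2" using pi_approx by simp_all
  have "3^2 \<le> pi^2" using pi(1) by (intro power_mono) auto
  moreover have "pi^2 \<le> 3.2^2" using pi by (intro power_mono) auto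
  then have "pi^2 < 12" by (simp add: power2_eq_square)
  ultimately show "1 \<le> zeta_real 2" "zeta_real 2 < 2" unfolding zeta_real_2_eq by simp_all
qed

lemma sum_inverse_squares_reindex: "(\<Sum>n<M. 1 / (real n + 1)^2) = (\<Sum>q\<in>{1..M}. 1 / real q ^ 2)"
  by (induction M) (auto simp: add.commute)

lemma sum_inverse_squares_diff_le:
  assumes "1 \<le> M" "M \<le> M'"
  shows "(\<Sum>q\<in>{1..M'}. 1 / real q ^ 2) - (\<Sum>q\<in>{1..M}. 1 / real q ^ 2) \<le> 1 / M - 1 / M'"
  using assms(2)
proof (induction M' rule: dec_induct)
  case base then show ?case by simp
next
  case (step n)
  have n1: "real n \<ge> 1" using assms step by simp
  have "1 / (real n + 1) ^ 2 \<le> 1 / (real n * (real n + 1))"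
    using n1 by (intro divide_left_mono) (auto simp: power2_eq_square intro!: mult_right_mono)
  moreover have "1 / real n - 1 / (real n + 1) = 1 / (real n * (real n + 1))"
    using n1 by (simp add: field_simps)
  ultimately have "1 / real (Suc n) ^ 2 \<le> 1 / real n - 1 / real (Suc n)" by (simp add: add.commute)
  moreover have "(\<Sum>q\<in>{1..Suc n}. 1 / real q ^ 2) = (\<Sum>q\<in>{1..n}. 1 / real q ^ 2) + 1 / real (Suc n) ^ 2"
    by simp
  ultimately show ?case using step.IH by simp
qed

lemma sum_inverse_squares_bounds:
  shows "(\<Sum>q\<in>{1..M}. 1 / real q ^ 2) \<le> zeta_real 2"
    and "1 \<le> M \<Longrightarrow> zeta_real 2 - (\<Sum>q\<in>{1..M}. 1 / real q ^ 2) \<le> 1 / M"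
proof -
  have s: "(\<lambda>n. 1 / (real n + 1)^2) sums zeta_real 2" by (rule zeta_real_2_sums)
  then have L: "(\<lambda>n. \<Sum>q\<in>{1..n}. 1 / real q ^ 2) \<longlonglongrightarrow> zeta_real 2"
    unfolding sums_def sum_inverse_squares_reindex .
  show "(\<Sum>q\<in>{1..M}. 1 / real q ^ 2) \<le> zeta_real 2"
  proof (rule LIMSEQ_le_const[OF L], intro exI allI impI)
    fix n assume "M \<le> n"
    then show "(\<Sum>q\<in>{1..M}. 1 / real q ^ 2) \<le> (\<Sum>q\<in>{1..n}. 1 / real q ^ 2)"
      by (intro sum_mono2) auto
  qed
  assume M: "1 \<le> M"
  have "zeta_real 2 \<le> (\<Sum>q\<in>{1..M}. 1 / real q ^ 2) + 1 / M"
  proof (rule LIMSEQ_le_const2[OF L], intro exI allI impI)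
    fix n assume "M \<le> n"
    then show "(\<Sum>q\<in>{1..n}. 1 / real q ^ 2) \<le> (\<Sum>q\<in>{1..M}. 1 / real q ^ 2) + 1 / M"
    proof -
      have "0 \<le> 1 / real n" by simp
      then show ?thesis using sum_inverse_squares_diff_le[OF M \<open>M \<le> n\<close>] by linarith
    qed
  qed
  then show "zeta_real 2 - (\<Sum>q\<in>{1..M}. 1 / real q ^ 2) \<le> 1 / M" by simp
qed

lemma sum_inverse_squares_from_2_le: "(\<Sum>q\<in>{2..M}. 1 / real q ^ 2) \<le> zeta_real 2 - 1"
proof (cases "M \<ge> 1")
  case True
  then have "(\<Sum>q\<in>{1..M}. 1 / real q ^ 2) = 1 + (\<Sum>q\<in>{2..M}. 1 / real q ^ 2)"
    using sum.atLeast_Suc_atMost[of 1 M "\<lambda>q. 1 / real q ^ 2"] by (simp add: numeral_2_eq_2)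
  then show ?thesis using sum_inverse_squares_bounds(1)[of M] by simp
next
  case False
  then show ?thesis using zeta_real_2_bounds(1) by simp
qed

lemma ln_le_two_sqrt: "x > 0 \<Longrightarrow> ln x \<le> 2 * sqrt x"
proof -
  assume x: "x > 0"
  have "ln (sqrt x) \<le> sqrt x - 1" using x by (intro ln_le_minus_one) auto
  moreover have "ln (sqrt x) = ln x / 2" using x by (simp add: ln_sqrt)
  ultimately show ?thesis by simp
qed

lemma summable_ln_div_square: "summable (\<lambda>n. ln (real n) / real n ^ 2)"
proof (rule summable_comparison_test)
  show "summable (\<lambda>n. 2 * real n powr (-3/2))"
    by (intro summable_mult) (simp add: summable_real_powr_iff)
  show "\<exists>N. \<forall>n\<ge>N. norm (ln (real n) / real n ^ 2) \<le> 2 * real n powr (-3/2)"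
  proof (intro exI allI impI)
    fix n :: nat assume n: "1 \<le> n"
    then have r: "real n \<ge> 1" by simp
    have "ln (real n) \<ge> 0" using r by simp
    moreover have "ln (real n) \<le> 2 * sqrt (real n)" using r by (intro ln_le_two_sqrt) auto
    moreover have "sqrt (real n) / real n ^ 2 = real n powr (-3/2)"
    proof -
      have "real n powr (1/2 - 2) = real n powr (1/2) / real n powr 2" by (rule powr_diff)
      moreover have "real n powr 2 = real n ^ 2" by simp
      moreover have "real n powr (1/2) = sqrt (real n)" by (simp add: powr_half_sqrt)
      ultimately show ?thesis by simp
    qed
    ultimately have "ln (real n) / real n ^ 2 \<le> 2 * sqrt (real n) / real n ^ 2"
      by (intro divide_right_mono) auto
    also have "\<dots> = 2 * real n powr (-3/2)" using \<open>sqrt (real n) / real n ^ 2 = real n powr (-3/2)\<close> by simp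
    finally show "norm (ln (real n) / real n ^ 2) \<le> 2 * real n powr (-3/2)"
      using \<open>ln (real n) \<ge> 0\<close> by simp
  qed
qed

lemma sum_ln_div_square_bounded:
  obtains A where "\<And>M. (\<Sum>q\<in>{1..M}. ln (real q) / real q ^ 2) \<le> A"
proof
  fix M
  have "0 \<le> ln (real m) / real m ^ 2" for m :: nat by (cases m) auto
  then show "(\<Sum>q\<in>{1..M}. ln (real q) / real q ^ 2) \<le> (\<Sum>n. ln (real n) / real n ^ 2)"
    using sum_le_suminf[OF summable_ln_div_square, of "{1..M}"] by auto
qed

lemma le_nat_floor_iff: "(k \<le> nat \<lfloor>Y\<rfloor>) \<longleftrightarrow> real k \<le> Y" if "k > 0" for k :: nat
proof (cases "\<lfloor>Y\<rfloor> \<ge> 0")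
  case True
  have "(k \<le> nat \<lfloor>Y\<rfloor>) \<longleftrightarrow> int k \<le> \<lfloor>Y\<rfloor>" using True by (simp add: le_nat_iff)
  also have "\<dots> \<longleftrightarrow> real k \<le> Y" by (simp add: le_floor_iff)
  finally show ?thesis .
next
  case False
  then have "Y < 0" by linarith
  then show ?thesis using False that by auto
qed

lemma pos_le_eq_atLeastAtMost_floor: "{k::nat. 0 < k \<and> real k \<le> Y} = {1..nat \<lfloor>Y\<rfloor>}"
  by (auto simp: le_nat_floor_iff)

lemma finite_pos_le: "finite {k::nat. 0 < k \<and> real k \<le> Y \<and> P k}"
  by (rule finite_subset[of _ "{1..nat \<lfloor>Y\<rfloor>}"]) (auto simp: le_nat_floor_iff)

lemma sum_inverse_pos_le_eq_harm: "(\<Sum>k\<in>{k::nat. 0 < k \<and> real k \<le> Y}. 1 / real k) = harm (nat \<lfloor>Y\<rfloor>)"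
  unfolding pos_le_eq_atLeastAtMost_floor harm_def by (simp add: divide_inverse)

lemma harm_floor_minus_ln_bounds:
  assumes Y: "Y \<ge> 1"
  shows "0 \<le> harm (nat \<lfloor>Y\<rfloor>) - ln Y" "harm (nat \<lfloor>Y\<rfloor>) - ln Y \<le> (1::real)"
proof -
  define n where "n = nat \<lfloor>Y\<rfloor>"
  have n1: "n \<ge> 1" unfolding n_def using Y by linarith
  have nY: "real n \<le> Y" "Y < real n + 1" unfolding n_def using Y by linarith+
  have "ln Y \<le> ln (real n + 1)" using nY Y by simp
  also have "\<dots> \<le> harm n" by (rule ln_le_harm)
  finally show "0 \<le> harm (nat \<lfloor>Y\<rfloor>) - ln Y" unfolding n_def by simp
  have "harm n - ln (real n) \<le> harm 1 - ln (real (1::nat))"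
    using n1 by (intro euler_mascheroni_sequence_decreasing) auto
  then have "harm n - ln (real n) \<le> (1::real)" by (simp add: harm_expand)
  moreover have "ln (real n) \<le> ln Y" using nY n1 by simp
  ultimately show "harm (nat \<lfloor>Y\<rfloor>) - ln Y \<le> (1::real)" unfolding n_def by simp
qed

definition sqfree_recip_sum :: "real \<Rightarrow> real" where
  "sqfree_recip_sum Y = (\<Sum>m\<in>{m::nat. 0 < m \<and> real m \<le> Y \<and> squarefree m}. 1 / real m)"

lemma pos_square_le_eq_atLeastAtMost:
  assumes "Y \<ge> 0"
  shows "{q::nat. 0 < q \<and> real q ^ 2 \<le> Y} = {1..nat \<lfloor>sqrt Y\<rfloor>}"
proof -
  have "real q ^ 2 \<le> Y \<longleftrightarrow> real q \<le> sqrt Y" for q :: nat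
  proof
    assume "real q ^ 2 \<le> Y" then show "real q \<le> sqrt Y" by (rule real_le_rsqrt)
  next
    assume "real q \<le> sqrt Y"
    then have "real q ^ 2 \<le> sqrt Y ^ 2" by (intro power_mono) auto
    then show "real q ^ 2 \<le> Y" using assms by (simp only: real_sqrt_pow2)
  qed
  then have "{q::nat. 0 < q \<and> real q ^ 2 \<le> Y} = {q::nat. 0 < q \<and> real q \<le> sqrt Y}" by blast
  then show ?thesis using pos_le_eq_atLeastAtMost_floor[of "sqrt Y"] by (simp only:)
qed

lemma bij_betw_squarefree_times_square:
  assumes Y: "Y \<ge> 0"
  shows "bij_betw (\<lambda>(q, m). m * q^2)
    (SIGMA q:{1..nat \<lfloor>sqrt Y\<rfloor>}. {m. 0 < m \<and> real m \<le> Y / real q ^ 2 \<and> squarefree m})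
    {k. 0 < k \<and> real k \<le> Y}"
  (is "bij_betw ?f ?A ?B")
proof (rule bij_betw_imageI)
  have le_iff: "real m \<le> Y / real q ^ 2 \<longleftrightarrow> real (m * q^2) \<le> Y" if "q > 0" for m q :: nat
    using that by (simp add: le_divide_eq)
  show "inj_on ?f ?A"
  proof (rule inj_onI)
    fix t t' assume t_mem: "t \<in> ?A" "t' \<in> ?A" and eq: "?f t = ?f t'"
    obtain q m q' m' where t: "t = (q, m)" "t' = (q', m')" by (cases t, cases t')
    have "0 < q" "0 < q'" "squarefree m" "squarefree m'" using t_mem unfolding t by auto
    moreover have "m * q^2 = m' * q'^2" using eq unfolding t by simp
    ultimately show "t = t'" unfolding t using squarefree_times_square_unique by blast
  qed
  show "?f ` ?A = ?B"
  proof
    show "?f ` ?A \<subseteq> ?B"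
    proof clarify
      fix q m assume "q \<in> {1..nat \<lfloor>sqrt Y\<rfloor>}" "0 < m" "real m \<le> Y / real q ^ 2"
      then show "0 < m * q^2 \<and> real (m * q^2) \<le> Y" using le_iff[of q m] by simp
    qed
    show "?B \<subseteq> ?f ` ?A"
    proof
      fix n assume "n \<in> ?B"
      then have n: "0 < n" "real n \<le> Y" by auto
      obtain m q where mq: "squarefree m" "q > 0" "n = m * q^2"
        using squarefree_times_square_decomposition[OF n(1)] .
      have m0: "m > 0" using mq(3) n(1) by (cases "m = 0") auto
      have "q^2 \<le> n" using mq m0 by simp
      then have "real q ^ 2 \<le> real n" by (metis of_nat_le_iff of_nat_power)
      then have "real q ^ 2 \<le> Y" using n(2) by linarith
      then have "q \<in> {1..nat \<lfloor>sqrt Y\<rfloor>}" using mq(2) pos_square_le_eq_atLeastAtMost[OF Y] by blast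
      moreover have "real m \<le> Y / real q ^ 2" using le_iff[OF mq(2)] n(2) mq(3) by simp
      ultimately have "(q, m) \<in> ?A" using mq(1) m0 by simp
      moreover have "n = ?f (q, m)" using mq(3) by simp
      ultimately show "n \<in> ?f ` ?A" by blast
    qed
  qed
qed

lemma harm_eq_sum_sqfree_recip_sum:
  assumes Y: "Y \<ge> 0"
  shows "harm (nat \<lfloor>Y\<rfloor>) = (\<Sum>q=1..nat \<lfloor>sqrt Y\<rfloor>. sqfree_recip_sum (Y / real q ^ 2) / real q ^ 2)"
proof -
  have "harm (nat \<lfloor>Y\<rfloor>) = (\<Sum>k\<in>{k. 0 < k \<and> real k \<le> Y}. 1 / real k)"
    by (simp add: sum_inverse_pos_le_eq_harm)
  also have "\<dots> = (\<Sum>(q, m)\<in>(SIGMA q:{1..nat \<lfloor>sqrt Y\<rfloor>}. {m. 0 < m \<and> real m \<le> Y / real q ^ 2 \<and> squarefree m}).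
                     1 / real m / real q ^ 2)"
    by (subst sum.reindex_bij_betw[OF bij_betw_squarefree_times_square[OF Y], symmetric])
       (simp add: case_prod_beta)
  also have "\<dots> = (\<Sum>q=1..nat \<lfloor>sqrt Y\<rfloor>. \<Sum>m\<in>{m. 0 < m \<and> real m \<le> Y / real q ^ 2 \<and> squarefree m}.
                     1 / real m / real q ^ 2)"
    by (rule sum.Sigma[symmetric]) (auto intro: finite_pos_le)
  also have "\<dots> = (\<Sum>q=1..nat \<lfloor>sqrt Y\<rfloor>. sqfree_recip_sum (Y / real q ^ 2) / real q ^ 2)"
    unfolding sqfree_recip_sum_def by (simp add: sum_divide_distrib)
  finally show ?thesis .
qed

text \<open>The constant \<open>1 / \<zeta>(2)\<close> is the density of the squarefree numbers.\<close>
definition sqfree_recip_error :: "real \<Rightarrow> real" where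
  "sqfree_recip_error Y = sqfree_recip_sum Y - ln Y / zeta_real 2"

text \<open>Inverting the identity for \<open>harm\<close>: only the \<open>q = 1\<close> term contains \<open>sqfree_recip_error Y\<close> itself.\<close>
lemma sqfree_recip_error_recurrence:
  assumes Y: "Y \<ge> 1"
  defines "M \<equiv> nat \<lfloor>sqrt Y\<rfloor>"
  shows "sqfree_recip_error Y = (harm (nat \<lfloor>Y\<rfloor>) - ln Y)
            + (ln Y / zeta_real 2) * (zeta_real 2 - (\<Sum>q\<in>{1..M}. 1 / real q ^ 2))
            + (2 / zeta_real 2) * (\<Sum>q\<in>{1..M}. ln (real q) / real q ^ 2)
            - (\<Sum>q\<in>{2..M}. sqfree_recip_error (Y / real q ^ 2) / real q ^ 2)"
proof -
  define z where "z = zeta_real 2"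
  have z0: "z > 0" unfolding z_def using zeta_real_2_bounds by linarith
  have "sqrt Y \<ge> 1" using Y by simp
  then have M1: "M \<ge> 1" unfolding M_def using le_nat_floor_iff[of 1 "sqrt Y"] by simp
  have term_eq: "sqfree_recip_sum (Y / real q ^ 2) / real q ^ 2
      = (ln Y / z) * (1 / real q ^ 2) - (2 / z) * (ln (real q) / real q ^ 2)
        + sqfree_recip_error (Y / real q ^ 2) / real q ^ 2" if "q \<ge> 1" for q
  proof -
    have lnq: "ln (Y / real q ^ 2) = ln Y - 2 * ln (real q)"
      using that Y by (subst ln_div) (auto simp: ln_realpow)
    show ?thesis unfolding sqfree_recip_error_def lnq z_def[symmetric] using z0 that
      by (simp add: field_simps)
  qed
  have "harm (nat \<lfloor>Y\<rfloor>) = (\<Sum>q\<in>{1..M}. sqfree_recip_sum (Y / real q ^ 2) / real q ^ 2)"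
    unfolding M_def using Y by (simp add: harm_eq_sum_sqfree_recip_sum)
  also have "\<dots> = (ln Y / z) * (\<Sum>q\<in>{1..M}. 1 / real q ^ 2) - (2 / z) * (\<Sum>q\<in>{1..M}. ln (real q) / real q ^ 2)
                 + (\<Sum>q\<in>{1..M}. sqfree_recip_error (Y / real q ^ 2) / real q ^ 2)"
    by (simp add: term_eq sum.distrib sum_subtractf sum_distrib_left)
  also have "(\<Sum>q\<in>{1..M}. sqfree_recip_error (Y / real q ^ 2) / real q ^ 2)
      = sqfree_recip_error Y + (\<Sum>q\<in>{2..M}. sqfree_recip_error (Y / real q ^ 2) / real q ^ 2)"
    using sum.atLeast_Suc_atMost[OF M1, of "\<lambda>q. sqfree_recip_error (Y / real q ^ 2) / real q ^ 2"]
    by (simp add: numeral_2_eq_2)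
  finally show ?thesis unfolding z_def[symmetric] using z0 by (simp add: right_diff_distrib)
qed

lemma floor_div_square_less:
  assumes Y: "Y \<ge> 1" and q: "q \<ge> 2" "real q ^ 2 \<le> Y"
  shows "nat \<lfloor>Y / real q ^ 2\<rfloor> < nat \<lfloor>Y\<rfloor>" "Y / real q ^ 2 \<ge> 1"
proof -
  have q4: "real q ^ 2 \<ge> 4"
  proof -
    have "real q \<ge> 2" using q by simp
    then have "real q ^ 2 \<ge> 2 ^ 2" by (intro power_mono) auto
    then show ?thesis by simp
  qed
  have Y4: "Y \<ge> 4" using q4 q(2) by linarith
  have qp: "real q ^ 2 > 0" using q4 by linarith
  show ge1: "Y / real q ^ 2 \<ge> 1" using q(2) qp by (simp add: le_divide_eq)
  have "Y / real q ^ 2 \<le> Y / 4" using q4 Y by (intro divide_left_mono) linarith+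
  moreover have "of_int \<lfloor>Y / real q ^ 2\<rfloor> \<le> Y / real q ^ 2" by (rule of_int_floor_le)
  moreover have "Y - 1 < of_int \<lfloor>Y\<rfloor>" by (rule real_of_int_floor_gt_diff_one)
  ultimately have "real_of_int \<lfloor>Y / real q ^ 2\<rfloor> < real_of_int \<lfloor>Y\<rfloor>" using Y4 by linarith
  then have lt: "\<lfloor>Y / real q ^ 2\<rfloor> < \<lfloor>Y\<rfloor>" by (simp only: of_int_less_iff)
  have "\<lfloor>Y / real q ^ 2\<rfloor> \<ge> 0" using ge1 by simp
  then show "nat \<lfloor>Y / real q ^ 2\<rfloor> < nat \<lfloor>Y\<rfloor>" using lt by linarith
qed

lemma abs_sqfree_recip_error_le:
  assumes Y: "Y \<ge> 1" and A: "\<And>M. (\<Sum>q\<in>{1..M}. ln (real q) / real q ^ 2) \<le> A"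
  defines "M \<equiv> nat \<lfloor>sqrt Y\<rfloor>"
  shows "\<bar>sqfree_recip_error Y\<bar> \<le> 5 + 2 * A + (\<Sum>q\<in>{2..M}. \<bar>sqfree_recip_error (Y / real q ^ 2)\<bar> / real q ^ 2)"
proof -
  define z where "z = zeta_real 2"
  have z1: "1 \<le> z" unfolding z_def using zeta_real_2_bounds by auto
  have "sqrt Y \<ge> 1" using Y by simp
  then have M1: "M \<ge> 1" and M_gt: "sqrt Y < real M + 1" unfolding M_def using le_nat_floor_iff[of 1 "sqrt Y"] by linarith+
  define P2 where "P2 = (\<Sum>q\<in>{1..M}. 1 / real q ^ 2)"
  define LQ where "LQ = (\<Sum>q\<in>{1..M}. ln (real q) / real q ^ 2)"
  define S2 where "S2 = (\<Sum>q\<in>{2..M}. sqfree_recip_error (Y / real q ^ 2) / real q ^ 2)"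
  have rec: "sqfree_recip_error Y = (harm (nat \<lfloor>Y\<rfloor>) - ln Y) + (ln Y / z) * (z - P2) + (2 / z) * LQ - S2"
    using sqfree_recip_error_recurrence[OF Y] unfolding M_def P2_def LQ_def S2_def z_def .
  have t1: "0 \<le> harm (nat \<lfloor>Y\<rfloor>) - ln Y" "harm (nat \<lfloor>Y\<rfloor>) - ln Y \<le> 1"
    using harm_floor_minus_ln_bounds[OF Y] by auto
  have lnY: "0 \<le> ln Y" using Y by simp
  have zP: "0 \<le> z - P2" "z - P2 \<le> 1 / real M"
    using sum_inverse_squares_bounds[of M] M1 unfolding P2_def z_def by auto
  have "ln Y \<le> 2 * sqrt Y" using Y by (intro ln_le_two_sqrt) auto
  also have "\<dots> \<le> 4 * real M" using M_gt M1 by simp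
  finally have lnM: "ln Y \<le> 4 * real M" .
  have "ln Y / z \<le> ln Y" using lnY z1 by (simp add: divide_le_eq mult_le_cancel_left1)
  then have "(ln Y / z) * (z - P2) \<le> ln Y * (1 / real M)"
    using zP lnY by (intro mult_mono) auto
  also have "\<dots> \<le> 4" using lnM M1 by (simp add: divide_le_eq)
  finally have t2: "0 \<le> (ln Y / z) * (z - P2)" "(ln Y / z) * (z - P2) \<le> 4" using lnY zP z1 by auto
  have LQ0: "0 \<le> LQ" unfolding LQ_def by (intro sum_nonneg) auto
  have "(2 / z) * LQ \<le> 2 * LQ" using LQ0 z1 by (intro mult_right_mono) (auto simp: divide_le_eq)
  also have "\<dots> \<le> 2 * A" using A[of M] unfolding LQ_def by simp
  finally have t3: "0 \<le> (2 / z) * LQ" "(2 / z) * LQ \<le> 2 * A" using LQ0 z1 by auto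
  have "\<bar>S2\<bar> \<le> (\<Sum>q\<in>{2..M}. \<bar>sqfree_recip_error (Y / real q ^ 2)\<bar> / real q ^ 2)"
    unfolding S2_def using sum_abs[of "\<lambda>q. sqfree_recip_error (Y / real q ^ 2) / real q ^ 2" "{2..M}"]
    by (simp add: abs_div)
  then show ?thesis unfolding rec using t1 t2 t3 by linarith
qed

text \<open>Strong induction on \<open>\<lfloor>Y\<rfloor>\<close>: the recursive terms contribute at most \<open>(\<zeta>(2) - 1) C\<close>, and
  \<open>\<zeta>(2) < 2\<close> makes this a contraction.\<close>
lemma sqfree_recip_error_bounded:
  obtains C where "C \<ge> 0" "\<And>Y. Y \<ge> 1 \<Longrightarrow> \<bar>sqfree_recip_error Y\<bar> \<le> C"
proof -
  define z where "z = zeta_real 2"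
  have z2: "z < 2" unfolding z_def using zeta_real_2_bounds by auto
  obtain A where A: "\<And>M. (\<Sum>q\<in>{1..M}. ln (real q) / real q ^ 2) \<le> A"
    using sum_ln_div_square_bounded by blast
  have A0: "A \<ge> 0" using A[of 0] by simp
  define C where "C = (5 + 2 * A) / (2 - z)"
  have C0: "C \<ge> 0" unfolding C_def using A0 z2 by simp
  have C_fix: "5 + 2 * A + C * (z - 1) = C" unfolding C_def using z2 by (simp add: field_simps)
  have bound: "\<bar>sqfree_recip_error Y\<bar> \<le> C" if "1 \<le> Y" "nat \<lfloor>Y\<rfloor> = n" for n Y
    using that
  proof (induction n arbitrary: Y rule: less_induct)
    case (less n)
    define M where "M = nat \<lfloor>sqrt Y\<rfloor>"
    have "(\<Sum>q\<in>{2..M}. \<bar>sqfree_recip_error (Y / real q ^ 2)\<bar> / real q ^ 2) \<le> (\<Sum>q\<in>{2..M}. C / real q ^ 2)"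
    proof (intro sum_mono divide_right_mono)
      fix q assume q: "q \<in> {2..M}"
      have Y0: "Y \<ge> 0" using less.prems(1) by simp
      have "q \<in> {q. 0 < q \<and> real q ^ 2 \<le> Y}"
        unfolding pos_square_le_eq_atLeastAtMost[OF Y0] using q unfolding M_def by simp
      then have "real q ^ 2 \<le> Y" by simp
      moreover have "q \<ge> 2" using q by simp
      ultimately have "nat \<lfloor>Y / real q ^ 2\<rfloor> < n" "1 \<le> Y / real q ^ 2"
        using floor_div_square_less[OF less.prems(1)] less.prems(2) by auto
      then show "\<bar>sqfree_recip_error (Y / real q ^ 2)\<bar> \<le> C" by (rule less.IH) simp
    qed simp
    also have "\<dots> = C * (\<Sum>q\<in>{2..M}. 1 / real q ^ 2)" by (simp add: sum_distrib_left)
    also have "\<dots> \<le> C * (z - 1)"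
      unfolding z_def using sum_inverse_squares_from_2_le C0 by (rule mult_left_mono)
    finally show ?case using abs_sqfree_recip_error_le[OF less.prems(1) A] C_fix unfolding M_def by linarith
  qed
  show thesis
  proof (rule that[OF C0])
    fix Y :: real assume "Y \<ge> 1"
    then show "\<bar>sqfree_recip_error Y\<bar> \<le> C" using bound by blast
  qed
qed

lemma ln_square_increment_bounds:
  fixes x :: real
  assumes x: "x \<ge> 1"
  defines "a \<equiv> ln x" and "b \<equiv> ln (x + 1)"
  shows "- (1 / x ^ 2) \<le> b ^ 2 - a ^ 2 - 2 * b / (x + 1)"
    and "b ^ 2 - a ^ 2 - 2 * b / (x + 1) \<le> 2 * b * (1 - 1 / (x + 1)) - 2 * a * (1 - 1 / x)"
proof -
  define d where "d = b - a"
  have a0: "a \<ge> 0" and ab: "a \<le> b" unfolding a_def b_def using x by simp_all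
  have d_le: "d \<le> 1 / x" unfolding d_def a_def b_def using ln_diff_le_inverse[OF x] by simp
  have d_ge: "1 / (x + 1) \<le> d"
  proof -
    have "ln (x / (x + 1)) \<le> x / (x + 1) - 1" using x by (intro ln_le_minus_one) auto
    moreover have "ln (x / (x + 1)) = a - b" unfolding a_def b_def using x by (simp add: ln_div)
    moreover have "x / (x + 1) - 1 = - (1 / (x + 1))" using x by (simp add: field_simps)
    ultimately show ?thesis unfolding d_def by linarith
  qed
  have d0: "0 \<le> d" using d_ge x by (smt (verit) divide_nonneg_nonneg)
  have incr_eq: "b ^ 2 - a ^ 2 - 2 * b / (x + 1) = 2 * (b * (d - 1 / (x + 1))) - d ^ 2"
    unfolding d_def by (simp add: algebra_simps power2_eq_square diff_divide_distrib)
  have "d ^ 2 \<le> (1 / x) ^ 2" using d0 d_le by (intro power_mono) auto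
  moreover have "0 \<le> b * (d - 1 / (x + 1))" using ab a0 d_ge by simp
  ultimately show "- (1 / x ^ 2) \<le> b ^ 2 - a ^ 2 - 2 * b / (x + 1)"
    unfolding incr_eq by (simp add: power_divide)
  have "b * (d - 1 / (x + 1)) \<le> b * (1 / x - 1 / (x + 1))" using ab a0 d_le by (intro mult_left_mono) auto
  moreover have "a * (1 - 1 / x) \<le> b * (1 - 1 / x)" using ab x by (intro mult_right_mono) auto
  moreover have "2 * b * (1 - 1 / (x + 1)) - 2 * a * (1 - 1 / x)
      = 2 * (b * (1 / x - 1 / (x + 1))) + 2 * (b * (1 - 1 / x) - a * (1 - 1 / x))"
    by (simp add: algebra_simps)
  ultimately show "b ^ 2 - a ^ 2 - 2 * b / (x + 1) \<le> 2 * b * (1 - 1 / (x + 1)) - 2 * a * (1 - 1 / x)"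
    unfolding incr_eq by (smt (verit) zero_le_power2)
qed

lemma sum_ln_div_bounds:
  assumes "n \<ge> 1"
  shows "- (\<Sum>k\<in>{1..<n}. 1 / real k ^ 2) \<le> ln (real n) ^ 2 - 2 * (\<Sum>k\<in>{1..n}. ln (real k) / real k)
       \<and> ln (real n) ^ 2 - 2 * (\<Sum>k\<in>{1..n}. ln (real k) / real k) \<le> 2 * ln (real n) * (1 - 1 / real n)"
  using assms
proof (induction n rule: dec_induct)
  case base
  then show ?case by simp
next
  case (step n)
  have "real n \<ge> 1" using step by simp
  from ln_square_increment_bounds[OF this] step.IH step.hyps show ?case
    by (simp add: add.commute)
qed

lemma sum_ln_div_approx:
  assumes "n \<ge> 1"
  shows "\<bar>(\<Sum>k\<in>{1..n}. ln (real k) / real k) - ln (real n) ^ 2 / 2\<bar> \<le> ln (real n) + 1"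
proof -
  have h: "- (\<Sum>k\<in>{1..<n}. 1 / real k ^ 2) \<le> ln (real n) ^ 2 - 2 * (\<Sum>k\<in>{1..n}. ln (real k) / real k)"
     "ln (real n) ^ 2 - 2 * (\<Sum>k\<in>{1..n}. ln (real k) / real k) \<le> 2 * ln (real n) * (1 - 1 / real n)"
    using sum_ln_div_bounds[OF assms] by auto
  have "(\<Sum>k\<in>{1..<n}. 1 / real k ^ 2) \<le> (\<Sum>k\<in>{1..n}. 1 / real k ^ 2)" by (intro sum_mono2) auto
  also have "\<dots> \<le> zeta_real 2" by (rule sum_inverse_squares_bounds(1))
  also have "\<dots> \<le> 2" using zeta_real_2_bounds(2) by simp
  finally have P2: "(\<Sum>k\<in>{1..<n}. 1 / real k ^ 2) \<le> 2" .
  have ln0: "ln (real n) \<ge> 0" using assms by simp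
  have "2 * ln (real n) * (1 - 1 / real n) \<le> 2 * ln (real n)" using ln0 assms by (simp add: mult_left_le)
  then show ?thesis using h P2 ln0 by linarith
qed

definition cube_range :: "real \<Rightarrow> nat set" where
  "cube_range B = {k::nat. 0 < k \<and> real k ^ 3 \<le> B}"

definition sqfree_range :: "real \<Rightarrow> nat \<Rightarrow> nat set" where
  "sqfree_range B k = {m::nat. 0 < m \<and> real m \<le> sqrt (B / real k ^ 3) \<and> squarefree m}"

lemma square_cube_le_iff:
  assumes "k > 0" "B \<ge> 0"
  shows "real m ^ 2 * real k ^ 3 \<le> B \<longleftrightarrow> real m \<le> sqrt (B / real k ^ 3)"
proof -
  have kp: "real k ^ 3 > 0" using assms by simp
  have "real m ^ 2 * real k ^ 3 \<le> B \<longleftrightarrow> real m ^ 2 \<le> B / real k ^ 3" using kp by (simp add: le_divide_eq)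
  also have "\<dots> \<longleftrightarrow> real m \<le> sqrt (B / real k ^ 3)"
  proof
    assume "real m ^ 2 \<le> B / real k ^ 3" then show "real m \<le> sqrt (B / real k ^ 3)" by (rule real_le_rsqrt)
  next
    assume "real m \<le> sqrt (B / real k ^ 3)"
    then have "real m ^ 2 \<le> sqrt (B / real k ^ 3) ^ 2" by (intro power_mono) auto
    then show "real m ^ 2 \<le> B / real k ^ 3" using assms kp by (simp only: real_sqrt_pow2 divide_nonneg_pos)
  qed
  finally show ?thesis .
qed

lemma sqfree_pairs_eq_Sigma:
  assumes B: "B \<ge> 1"
  shows "sqfree_pairs (nat \<lfloor>B\<rfloor>) = Sigma (cube_range B) (sqfree_range B)"
proof -
  have B0: "B \<ge> 0" using B by simp
  have "(k, m) \<in> sqfree_pairs (nat \<lfloor>B\<rfloor>) \<longleftrightarrow> (k, m) \<in> Sigma (cube_range B) (sqfree_range B)" for k m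
  proof (cases "0 < k \<and> 0 < m")
    case True
    then have km: "0 < k" "0 < m" by auto
    have "m^2 * k^3 \<le> nat \<lfloor>B\<rfloor> \<longleftrightarrow> real (m^2 * k^3) \<le> B"
      using km by (intro le_nat_floor_iff) simp
    also have "\<dots> \<longleftrightarrow> real m ^ 2 * real k ^ 3 \<le> B" by simp
    also have "\<dots> \<longleftrightarrow> real m \<le> sqrt (B / real k ^ 3)" using square_cube_le_iff[OF km(1) B0] .
    finally have e: "m^2 * k^3 \<le> nat \<lfloor>B\<rfloor> \<longleftrightarrow> real m \<le> sqrt (B / real k ^ 3)" .
    have "real m \<le> sqrt (B / real k ^ 3) \<Longrightarrow> real k ^ 3 \<le> B"
    proof -
      assume "real m \<le> sqrt (B / real k ^ 3)"
      then have "real m ^ 2 * real k ^ 3 \<le> B" using square_cube_le_iff[OF km(1) B0] by simp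
      moreover have "real k ^ 3 \<le> real m ^ 2 * real k ^ 3" using km by simp
      ultimately show ?thesis by linarith
    qed
    then show ?thesis using e km unfolding sqfree_pairs_def cube_range_def sqfree_range_def by auto
  next
    case False
    then show ?thesis unfolding sqfree_pairs_def cube_range_def sqfree_range_def by auto
  qed
  then show ?thesis by auto
qed

lemma le_cube: "k > 0 \<Longrightarrow> real k \<le> real k ^ 3" for k :: nat
  using power_increasing[of 1 3 "real k"] by simp

lemma cube_range_subset: "cube_range B \<subseteq> {k::nat. 0 < k \<and> real k \<le> B}"
proof
  fix k assume "k \<in> cube_range B"
  then have k: "0 < k" "real k ^ 3 \<le> B" unfolding cube_range_def by auto
  then have "real k \<le> B" using le_cube[OF k(1)] by linarith
  then show "k \<in> {k::nat. 0 < k \<and> real k \<le> B}" using k by simp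
qed

lemma finite_cube_range: "finite (cube_range B)"
  by (rule finite_subset[OF cube_range_subset]) (rule finite_pos_le[where P = "\<lambda>_. True", simplified])

lemma finite_sqfree_range: "finite (sqfree_range B k)"
  unfolding sqfree_range_def by (rule finite_pos_le)

lemma floor_div_term_error:
  fixes m k :: nat and B :: real
  assumes km: "m > 0" "k > 0" and B: "B \<ge> 1"
  shows "\<bar>real (m * k^2 * (nat \<lfloor>B\<rfloor> div (m^2 * k^3))) - B / (real m * real k)\<bar> \<le> 2 * (real m * real k ^ 2)"
proof -
  define N where "N = nat \<lfloor>B\<rfloor>"
  define q where "q = m^2 * k^3"
  have q0: "q > 0" unfolding q_def using km by simp
  have NB: "real N \<le> B" "B < real N + 1" unfolding N_def using B by linarith+
  define D where "D = real (N div q)"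
  define R where "R = real (N mod q)"
  define Q where "Q = real q"
  have Q0: "Q > 0" unfolding Q_def using q0 by simp
  have e1: "real (N div q * q + N mod q) = real N" by simp
  have NDR: "real N = D * Q + R" unfolding D_def R_def Q_def e1[symmetric] of_nat_add of_nat_mult ..
  have R: "0 \<le> R" "R < Q" unfolding R_def Q_def using q0 by auto
  have "D - B / Q = (real N - R - B) / Q" using Q0 NDR by (simp add: field_simps)
  moreover have "real N - R - B \<le> 0" using NB R by linarith
  moreover have Q1: "Q \<ge> 1" unfolding Q_def using q0 by simp
  then have "real N - R - B \<ge> - 2 * Q" using NB R by linarith
  ultimately have "D - B / Q \<le> 0" "-2 \<le> D - B / Q" using Q0 by (simp_all add: divide_nonpos_pos le_divide_eq)
  then have Dabs: "\<bar>D - B / Q\<bar> \<le> 2" by linarith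
  define w where "w = real m * real k ^ 2"
  have w0: "w > 0" unfolding w_def using km by simp
  have wQ: "w * (B / Q) = B / (real m * real k)" unfolding w_def Q_def q_def using km
    by (simp add: field_simps power2_eq_square power3_eq_cube)
  have "real (m * k^2 * (N div q)) - B / (real m * real k) = w * (D - B / Q)"
    unfolding w_def D_def wQ[symmetric] by (simp add: algebra_simps)
  then have "\<bar>real (m * k^2 * (N div q)) - B / (real m * real k)\<bar> = w * \<bar>D - B / Q\<bar>"
    using w0 by (simp add: abs_mult)
  also have "\<dots> \<le> w * 2" using Dabs w0 by (intro mult_left_mono) auto
  finally show ?thesis unfolding N_def q_def w_def by simp
qed

lemma sum_sqfree_pairs_eq:
  assumes B: "B \<ge> 1"
  shows "(\<Sum>p\<in>sqfree_pairs (nat \<lfloor>B\<rfloor>). f p) = (\<Sum>k\<in>cube_range B. \<Sum>m\<in>sqfree_range B k. f (k, m))"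
proof -
  have "(\<Sum>k\<in>cube_range B. \<Sum>m\<in>sqfree_range B k. f (k, m)) = (\<Sum>(k, m)\<in>Sigma (cube_range B) (sqfree_range B). f (k, m))"
    by (rule sum.Sigma) (auto simp: finite_cube_range finite_sqfree_range)
  also have "\<dots> = (\<Sum>p\<in>sqfree_pairs (nat \<lfloor>B\<rfloor>). f p)" unfolding sqfree_pairs_eq_Sigma[OF B] by (simp add: case_prod_beta)
  finally show ?thesis by simp
qed

lemma sum_inverse_cube_range_le:
  assumes B: "B \<ge> 1"
  shows "(\<Sum>k\<in>cube_range B. 1 / real k) \<le> 1 + ln B"
proof -
  have "(\<Sum>k\<in>cube_range B. 1 / real k) \<le> (\<Sum>k\<in>{k::nat. 0 < k \<and> real k \<le> B}. 1 / real k)"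
    by (rule sum_mono2) (use cube_range_subset finite_pos_le[where P = "\<lambda>_. True"] in auto)
  also have "\<dots> = harm (nat \<lfloor>B\<rfloor>)" by (rule sum_inverse_pos_le_eq_harm)
  also have "\<dots> \<le> 1 + ln B" using harm_floor_minus_ln_bounds[OF B] by simp
  finally show ?thesis .
qed

lemma sum_sqfree_pairs_weight_le:
  assumes B: "B \<ge> 1"
  shows "(\<Sum>(k, m)\<in>sqfree_pairs (nat \<lfloor>B\<rfloor>). real m * real k ^ 2) \<le> B * (1 + ln B)"
proof -
  have inner: "(\<Sum>m\<in>sqfree_range B k. real m * real k ^ 2) \<le> B * (1 / real k)" if k: "k \<in> cube_range B" for k
  proof -
    have k0: "k > 0" "real k ^ 3 \<le> B" using k unfolding cube_range_def by auto
    define Y where "Y = sqrt (B / real k ^ 3)"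
    have Y0: "Y \<ge> 0" unfolding Y_def using B by simp
    have YY: "Y * Y = B / real k ^ 3" unfolding Y_def using B by simp
    have sub: "sqfree_range B k \<subseteq> {1..nat \<lfloor>Y\<rfloor>}" 
    proof
      fix m assume "m \<in> sqfree_range B k"
      then have m: "0 < m" "real m \<le> Y" unfolding sqfree_range_def Y_def by auto
      then have "m \<le> nat \<lfloor>Y\<rfloor>" using le_nat_floor_iff[of m Y] by blast
      then show "m \<in> {1..nat \<lfloor>Y\<rfloor>}" using m by simp
    qed
    have "real (card (sqfree_range B k)) \<le> real (nat \<lfloor>Y\<rfloor>)"
      using card_mono[OF _ sub] by simp
    also have "\<dots> \<le> Y" using Y0 by linarith
    finally have cardY: "real (card (sqfree_range B k)) \<le> Y" .
    have "(\<Sum>m\<in>sqfree_range B k. real m) \<le> real (card (sqfree_range B k)) * Y"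
      by (rule sum_bounded_above) (auto simp: sqfree_range_def Y_def)
    also have "\<dots> \<le> Y * Y" using cardY Y0 by (intro mult_right_mono) auto
    finally have sm: "(\<Sum>m\<in>sqfree_range B k. real m) \<le> B / real k ^ 3" using YY by simp
    have "(\<Sum>m\<in>sqfree_range B k. real m * real k ^ 2) = (\<Sum>m\<in>sqfree_range B k. real m) * real k ^ 2"
      by (simp add: sum_distrib_right)
    also have "\<dots> \<le> (B / real k ^ 3) * real k ^ 2" using sm by (intro mult_right_mono) auto
    also have "\<dots> = B * (1 / real k)" using k0 by (simp add: field_simps power2_eq_square power3_eq_cube)
    finally show ?thesis .
  qed
  have "(\<Sum>p\<in>sqfree_pairs (nat \<lfloor>B\<rfloor>). real (snd p) * real (fst p) ^ 2) = (\<Sum>k\<in>cube_range B. \<Sum>m\<in>sqfree_range B k. real m * real k ^ 2)"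
    using sum_sqfree_pairs_eq[OF B, of "\<lambda>p. real (snd p) * real (fst p) ^ 2"] by simp
  also have "\<dots> \<le> (\<Sum>k\<in>cube_range B. B * (1 / real k))" by (intro sum_mono inner)
  also have "\<dots> = B * (\<Sum>k\<in>cube_range B. 1 / real k)" by (simp add: sum_distrib_left)
  also have "\<dots> \<le> B * (1 + ln B)" using sum_inverse_cube_range_le[OF B] B by (intro mult_left_mono) auto
  finally show ?thesis by (simp only: split_def)
qed

lemma sum_floor_div_approx:
  assumes B: "B \<ge> 1"
  shows "\<bar>real (\<Sum>(k, m)\<in>sqfree_pairs (nat \<lfloor>B\<rfloor>). m * k^2 * (nat \<lfloor>B\<rfloor> div (m^2 * k^3)))
          - B * (\<Sum>(k, m)\<in>sqfree_pairs (nat \<lfloor>B\<rfloor>). 1 / (real m * real k))\<bar> \<le> 2 * (B * (1 + ln B))"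
proof -
  define N where "N = nat \<lfloor>B\<rfloor>"
  define a where "a = (\<lambda>p::nat \<times> nat. real (snd p * fst p^2 * (N div (snd p^2 * fst p^3))))"
  define b where "b = (\<lambda>p::nat \<times> nat. B / (real (snd p) * real (fst p)))"
  have e: "real (\<Sum>p\<in>sqfree_pairs N. snd p * fst p^2 * (N div (snd p^2 * fst p^3)))
          - B * (\<Sum>p\<in>sqfree_pairs N. 1 / (real (snd p) * real (fst p)))
        = (\<Sum>p\<in>sqfree_pairs N. a p - b p)"
    unfolding a_def b_def sum_subtractf of_nat_sum sum_distrib_left by simp
  have "\<bar>\<Sum>p\<in>sqfree_pairs N. a p - b p\<bar> \<le> (\<Sum>p\<in>sqfree_pairs N. \<bar>a p - b p\<bar>)"
    by (rule sum_abs)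
  also have "\<dots> \<le> (\<Sum>p\<in>sqfree_pairs N. 2 * (real (snd p) * real (fst p) ^ 2))"
  proof (intro sum_mono)
    fix p assume "p \<in> sqfree_pairs N"
    then have "snd p > 0" "fst p > 0" unfolding sqfree_pairs_def by auto
    then show "\<bar>a p - b p\<bar> \<le> 2 * (real (snd p) * real (fst p) ^ 2)"
      unfolding a_def b_def N_def by (rule floor_div_term_error[OF _ _ B])
  qed
  also have "\<dots> = 2 * (\<Sum>p\<in>sqfree_pairs N. real (snd p) * real (fst p) ^ 2)" by (rule sum_distrib_left[symmetric])
  also have "\<dots> \<le> 2 * (B * (1 + ln B))"
    using sum_sqfree_pairs_weight_le[OF B] unfolding N_def case_prod_beta by simp
  finally show ?thesis unfolding e[unfolded N_def] N_def split_def .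
qed

lemma sum_sqfree_pairs_inverse_eq:
  assumes B: "B \<ge> 1"
  shows "(\<Sum>(k, m)\<in>sqfree_pairs (nat \<lfloor>B\<rfloor>). 1 / (real m * real k))
       = (\<Sum>k\<in>cube_range B. sqfree_recip_sum (sqrt (B / real k ^ 3)) / real k)"
proof -
  have "(\<Sum>p\<in>sqfree_pairs (nat \<lfloor>B\<rfloor>). 1 / (real (snd p) * real (fst p)))
      = (\<Sum>k\<in>cube_range B. \<Sum>m\<in>sqfree_range B k. 1 / real m / real k)"
    using sum_sqfree_pairs_eq[OF B, of "\<lambda>p. 1 / (real (snd p) * real (fst p))"] by simp
  then show ?thesis
    unfolding sqfree_recip_sum_def sqfree_range_def by (simp add: sum_divide_distrib split_def)
qed

lemma cube_range_eq:
  assumes B: "B \<ge> 1"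
  shows "cube_range B = {1..nat \<lfloor>root 3 B\<rfloor>}"
proof -
  have "real k ^ 3 \<le> B \<longleftrightarrow> real k \<le> root 3 B" for k :: nat
  proof -
    have "real k ^ 3 \<le> B \<longleftrightarrow> root 3 (real k ^ 3) \<le> root 3 B" by (simp only: real_root_le_iff zero_less_numeral)
    also have "root 3 (real k ^ 3) = real k" by (rule real_root_pos2) auto
    finally show ?thesis .
  qed
  then have "cube_range B = {k::nat. 0 < k \<and> real k \<le> root 3 B}" unfolding cube_range_def by blast
  then show ?thesis using pos_le_eq_atLeastAtMost_floor by simp
qed

lemma abs_quadratic_main_term_le:
  fixes t u HK LK :: real
  assumes t0: "0 \<le> t" and u0: "0 \<le> u" and ut: "u \<le> t" "t \<le> u + 1"
    and HK: "0 \<le> HK - t" "HK - t \<le> 1"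
    and LK: "\<bar>LK - u ^ 2 / 2\<bar> \<le> u + 1"
  shows "\<bar>3 * t * HK - 3 * LK - 3 / 2 * t ^ 2\<bar> \<le> 9 * t + 3"
proof -
  define e1 where "e1 = HK - t"
  define e2 where "e2 = LK - u ^ 2 / 2"
  have E: "3 * t * HK - 3 * LK - 3 / 2 * t ^ 2 = 3 / 2 * ((t - u) * (t + u)) + 3 * (t * e1) - 3 * e2"
    unfolding e1_def e2_def by (simp add: field_simps power2_eq_square)
  have f1: "0 \<le> t * e1" unfolding e1_def using t0 HK by simp
  have f1': "t * e1 \<le> t * 1" unfolding e1_def using mult_left_mono[of "HK - t" 1 t] t0 HK by simp
  have f2: "0 \<le> (t - u) * (t + u)" using ut u0 by simp
  have f3: "(t - u) * (t + u) \<le> 1 * (t + u)" using ut u0 by (intro mult_right_mono) auto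
  have f4: "\<bar>e2\<bar> \<le> u + 1" unfolding e2_def using LK .
  have f4': "e2 \<le> u + 1" "- e2 \<le> u + 1" using f4 by (auto simp: abs_le_iff)
  have f1'': "t * e1 \<le> t" using f1' by simp
  have f3': "(t - u) * (t + u) \<le> t + u" using f3 by simp
  show ?thesis unfolding E abs_le_iff using f1 f1'' f2 f3' f4' ut t0 u0 by (intro conjI) linarith+
qed

lemma sum_cube_range_harm_ln_bound:
  assumes B: "B \<ge> 1"
  shows "\<bar>ln B * (\<Sum>k\<in>cube_range B. 1 / real k) - 3 * (\<Sum>k\<in>cube_range B. ln (real k) / real k)
           - ln B ^ 2 / 6\<bar> \<le> 3 * ln B + 3"
proof -
  define R where "R = root 3 B"
  define n where "n = nat \<lfloor>R\<rfloor>"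
  have R1: "R \<ge> 1" unfolding R_def using B by simp
  have n1: "n \<ge> 1" unfolding n_def using R1 by linarith
  have nR: "real n \<le> R" "R < real n + 1" unfolding n_def using R1 by linarith+
  have range_eq: "cube_range B = {1..n}" unfolding n_def R_def by (rule cube_range_eq[OF B])
  define HK where "HK = (\<Sum>k\<in>cube_range B. 1 / real k)"
  define LK where "LK = (\<Sum>k\<in>cube_range B. ln (real k) / real k)"
  define t where "t = ln R"
  define u where "u = ln (real n)"
  have t3: "ln B = 3 * t" unfolding t_def R_def using B by (simp add: ln_root)
  have t0: "0 \<le> t" unfolding t_def using R1 by simp
  have u0: "0 \<le> u" unfolding u_def using n1 by simp
  have ut: "u \<le> t" unfolding u_def t_def using nR n1 by simp
  have "R \<le> 2 * real n" using nR n1 by linarith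
  then have "t \<le> ln (2 * real n)" unfolding t_def using R1 by simp
  also have "\<dots> = ln 2 + u" unfolding u_def using n1 by (simp add: ln_mult)
  finally have tu: "t \<le> u + 1" using ln_2_less_1 by linarith
  have "HK = harm n" unfolding HK_def range_eq harm_def by (simp add: divide_inverse)
  then have HKt: "0 \<le> HK - t" "HK - t \<le> 1"
    using harm_floor_minus_ln_bounds[OF R1] unfolding t_def n_def by auto
  have LKu: "\<bar>LK - u ^ 2 / 2\<bar> \<le> u + 1" unfolding LK_def range_eq u_def using sum_ln_div_approx[OF n1] .
  have "\<bar>3 * t * HK - 3 * LK - 3 / 2 * t ^ 2\<bar> \<le> 9 * t + 3"
    by (rule abs_quadratic_main_term_le[OF t0 u0 ut tu HKt LKu])
  then show ?thesis unfolding HK_def[symmetric] LK_def[symmetric] t3 by (simp add: power2_eq_square)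
qed

text \<open>Each inner sum over \<open>m\<close> is a squarefree reciprocal sum up to \<open>\<surd>(B/k\<^sup>3)\<close>, whose main term
  \<open>ln (B/k\<^sup>3) / (2 \<zeta>(2))\<close> is linear in \<open>ln k\<close>.\<close>
lemma sum_cube_range_sqfree_recip_sum_eq:
  assumes B: "B \<ge> 1"
  shows "(\<Sum>k\<in>cube_range B. sqfree_recip_sum (sqrt (B / real k ^ 3)) / real k)
    = (ln B * (\<Sum>k\<in>cube_range B. 1 / real k) - 3 * (\<Sum>k\<in>cube_range B. ln (real k) / real k)) / (2 * zeta_real 2)
      + (\<Sum>k\<in>cube_range B. sqfree_recip_error (sqrt (B / real k ^ 3)) / real k)"
proof -
  define z where "z = zeta_real 2"
  have z0: "z > 0" unfolding z_def using zeta_real_2_bounds by linarith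
  have "sqfree_recip_sum (sqrt (B / real k ^ 3)) / real k
      = (ln B * (1 / real k) - 3 * (ln (real k) / real k)) / (2 * z)
        + sqfree_recip_error (sqrt (B / real k ^ 3)) / real k" if "k \<in> cube_range B" for k
  proof -
    have k0: "k > 0" using that unfolding cube_range_def by auto
    have ln_eq: "ln (sqrt (B / real k ^ 3)) = (ln B - 3 * ln (real k)) / 2"
      using B k0 by (simp add: ln_sqrt ln_div ln_realpow)
    show ?thesis unfolding sqfree_recip_error_def z_def[symmetric] ln_eq using k0 z0
      by (simp add: field_simps)
  qed
  then have "(\<Sum>k\<in>cube_range B. sqfree_recip_sum (sqrt (B / real k ^ 3)) / real k)
      = (\<Sum>k\<in>cube_range B. (ln B * (1 / real k) - 3 * (ln (real k) / real k)) / (2 * z))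
        + (\<Sum>k\<in>cube_range B. sqfree_recip_error (sqrt (B / real k ^ 3)) / real k)"
    by (simp add: sum.distrib)
  then show ?thesis unfolding z_def
    by (simp add: sum_divide_distrib[symmetric] sum_subtractf sum_distrib_left)
qed

lemma sum_sqfree_pairs_inverse_asymp:
  assumes B: "B \<ge> 1" and CT: "CT \<ge> 0" "\<And>Y. Y \<ge> 1 \<Longrightarrow> \<bar>sqfree_recip_error Y\<bar> \<le> CT"
  shows "\<bar>(\<Sum>k\<in>cube_range B. sqfree_recip_sum (sqrt (B / real k ^ 3)) / real k) - ln B ^ 2 / (12 * zeta_real 2)\<bar>
           \<le> (CT + 2) * (1 + ln B)"
proof -
  define z where "z = zeta_real 2"
  have z1: "z \<ge> 1" unfolding z_def using zeta_real_2_bounds by simp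
  define HK where "HK = (\<Sum>k\<in>cube_range B. 1 / real k)"
  define LK where "LK = (\<Sum>k\<in>cube_range B. ln (real k) / real k)"
  define ST where "ST = (\<Sum>k\<in>cube_range B. sqfree_recip_error (sqrt (B / real k ^ 3)) / real k)"
  have "\<bar>ST\<bar> \<le> (\<Sum>k\<in>cube_range B. CT * (1 / real k))"
    unfolding ST_def
  proof (rule order_trans[OF sum_abs sum_mono])
    fix k assume "k \<in> cube_range B"
    then have k0: "k > 0" "real k ^ 3 \<le> B" unfolding cube_range_def by auto
    then have "sqrt (B / real k ^ 3) \<ge> 1" by (simp add: le_divide_eq)
    then show "\<bar>sqfree_recip_error (sqrt (B / real k ^ 3)) / real k\<bar> \<le> CT * (1 / real k)"
      using CT(2) k0 by (simp add: abs_div divide_right_mono)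
  qed
  also have "\<dots> = CT * HK" unfolding HK_def by (rule sum_distrib_left[symmetric])
  also have "\<dots> \<le> CT * (1 + ln B)"
    unfolding HK_def using sum_inverse_cube_range_le[OF B] CT(1) by (intro mult_left_mono)
  finally have ST_le: "\<bar>ST\<bar> \<le> CT * (1 + ln B)" .
  have "(ln B * HK - 3 * LK) / (2 * z) - ln B ^ 2 / (12 * z) = (ln B * HK - 3 * LK - ln B ^ 2 / 6) / (2 * z)"
    using z1 by (simp add: field_simps)
  then have "\<bar>(ln B * HK - 3 * LK) / (2 * z) - ln B ^ 2 / (12 * z)\<bar> = \<bar>ln B * HK - 3 * LK - ln B ^ 2 / 6\<bar> / (2 * z)"
    using z1 by (simp add: abs_div)
  also have "\<dots> \<le> (3 * ln B + 3) / 2"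
    using sum_cube_range_harm_ln_bound[OF B] z1 B unfolding HK_def LK_def
    by (intro frac_le) auto
  finally have "\<bar>(ln B * HK - 3 * LK) / (2 * z) - ln B ^ 2 / (12 * z)\<bar> \<le> 2 * (1 + ln B)"
    using ln_ge_zero[OF B] by (simp add: field_simps)
  then show ?thesis
    using ST_le sum_cube_range_sqfree_recip_sum_eq[OF B] unfolding HK_def LK_def ST_def z_def
    by (simp add: algebra_simps)
qed

lemma subring_count_sum_error_bound:
  obtains C where "\<And>B. B \<ge> 1 \<Longrightarrow>
    \<bar>real (\<Sum>n\<in>{1..nat \<lfloor>B\<rfloor>}. subring_count n) - B * (ln B)^2 / (12 * zeta_real 2)\<bar> \<le> C * (B * (1 + ln B))"
proof -
  obtain CT where CT: "CT \<ge> 0" "\<And>Y. Y \<ge> 1 \<Longrightarrow> \<bar>sqfree_recip_error Y\<bar> \<le> CT"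
    using sqfree_recip_error_bounded by blast
  have "\<bar>real (\<Sum>n\<in>{1..nat \<lfloor>B\<rfloor>}. subring_count n) - B * (ln B)^2 / (12 * zeta_real 2)\<bar>
      \<le> (CT + 4) * (B * (1 + ln B))" if B: "B \<ge> 1" for B
  proof -
    define G where "G = (\<Sum>k\<in>cube_range B. sqfree_recip_sum (sqrt (B / real k ^ 3)) / real k)"
    have "\<bar>real (\<Sum>n\<in>{1..nat \<lfloor>B\<rfloor>}. subring_count n) - B * G\<bar> \<le> 2 * (B * (1 + ln B))"
      using sum_floor_div_approx[OF B]
      unfolding sum_subring_count sum_index_pairs_eq sum_sqfree_pairs_inverse_eq[OF B] G_def .
    moreover have "\<bar>B * G - B * (ln B)^2 / (12 * zeta_real 2)\<bar> \<le> B * ((CT + 2) * (1 + ln B))"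
    proof -
      have "B * G - B * (ln B)^2 / (12 * zeta_real 2) = B * (G - (ln B)^2 / (12 * zeta_real 2))"
        by (simp add: right_diff_distrib)
      then have "\<bar>B * G - B * (ln B)^2 / (12 * zeta_real 2)\<bar> = B * \<bar>G - (ln B)^2 / (12 * zeta_real 2)\<bar>"
        using B by (simp add: abs_mult)
      also have "\<dots> \<le> B * ((CT + 2) * (1 + ln B))"
        using sum_sqfree_pairs_inverse_asymp[OF B CT] B unfolding G_def by (intro mult_left_mono) auto
      finally show ?thesis .
    qed
    ultimately show ?thesis by (simp add: algebra_simps)
  qed
  then show thesis by (rule that)
qed

theorem corollary6:
  shows "(\<lambda>B::real. real (\<Sum>n\<in>{1..nat \<lfloor>B\<rfloor>}. subring_count n))
           \<sim>[at_top] (\<lambda>B. B * (ln B)^2 / (12 * zeta_real 2))"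
proof (rule smallo_imp_asymp_equiv)
  define f where "f = (\<lambda>B::real. real (\<Sum>n\<in>{1..nat \<lfloor>B\<rfloor>}. subring_count n))"
  define g where "g = (\<lambda>B::real. B * (ln B)^2 / (12 * zeta_real 2))"
  obtain C where C: "\<And>B. B \<ge> 1 \<Longrightarrow> \<bar>f B - g B\<bar> \<le> C * (B * (1 + ln B))"
    using subring_count_sum_error_bound unfolding f_def g_def by metis
  have "(\<lambda>B. f B - g B) \<in> O(\<lambda>B. B * (1 + ln B))"
  proof (rule bigoI)
    show "\<forall>\<^sub>F x in at_top. norm (f x - g x) \<le> C * norm (x * (1 + ln x))"
      using eventually_ge_at_top[of "1::real"]
    proof eventually_elim
      case (elim x)
      have "x * (1 + ln x) \<ge> 0" using elim by simp
      then show ?case using C[OF elim] by simp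
    qed
  qed
  moreover have "(\<lambda>B::real. B * (1 + ln B)) \<in> o(g)"
  proof -
    have "zeta_real 2 > 0" using zeta_real_2_bounds by simp
    then show ?thesis unfolding g_def by real_asymp
  qed
  ultimately show "(\<lambda>B. f B - g B) \<in> o(g)" by (rule landau_o.big_small_trans)
qed

end
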